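(* There does not exist an unconditionally secure QPKE scheme. More precisely, for every (correct) QPKE scheme $(\mathsf{SKGen},\mathsf{PKGen},\mathsf{Enc},\mathsf{Dec})$ there is a computationally unbounded adversary which, in the everlasting-security experiment (receiving a single copy of the public key), recovers the encrypted message $m$ with certainty; in particular the trace distance between the experiment outputs for $m=0$ and $m=1$ equals $1$ for this adversary.
   Context: A QPKE scheme consists of: a PPT algorithm $\mathsf{SKGen}(1^\lambda)$ outputting a classical secret key $\mathsf{sk}$; a QPT algorithm $\mathsf{PKGen}(\mathsf{sk})$ outputting a (possibly mixed) quantum state $\rho$ and a classical string $\mathsf{pk}$; a QPT algorithm $\mathsf{Enc}(\rho,\mathsf{pk},m)$ outputting a ciphertext $\mathsf{ct}$ for $m\in\{0,1\}$; a QPT algorithm $\mathsf{Dec}(\mathsf{sk},\mathsf{ct})$ outputting $m\in\{0,1\}$. Correctness: for all $\lambda$ and $m$, $\Pr[\mathsf{Dec}(\mathsf{sk},\mathsf{Enc}(\rho,\mathsf{pk},m))=m]=1$ where $\mathsf{sk}\gets\mathsf{SKGen}(1^\lambda)$, $(\rho,\mathsf{pk})\gets\mathsf{PKGen}(\mathsf{sk})$. The everlasting-security experiment $\mathsf{Exp}^{\mathcal A}(1^\lambda,m)$: sample $\mathsf{sk}\gets\mathsf{SKGen}(1^\lambda)$, $(\rho,\mathsf{pk})\gets\mathsf{PKGen}(\mathsf{sk})$, give $(\rho,\mathsf{pk})$ to $\mathcal A$, which returns a modified public-key register and an internal register; compute $\mathsf{ct}$ by applying $\mathsf{Enc}(\cdot,\mathsf{pk},m)$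 (with the original $\mathsf{pk}$) to the returned register; output the joint state of $\mathsf{ct}$ and the internal register. Unconditional security would require the trace distance between the outputs for $m=0$ and $m=1$ to be negligible for all adversaries $\mathcal A$, including computationally unbounded ones. *)

theory Defs
  imports "Jordan_Normal_Form.Matrix" "HOL-Probability.Probability_Mass_Function"
begin

definition dagger :: "complex mat \<Rightarrow> complex mat" where
  "dagger A = Matrix.mat (dim_col A) (dim_row A) (\<lambda>(i,j). cnj (A $$ (j,i)))"

definition mtrace :: "complex mat \<Rightarrow> complex" where
  "mtrace A = (\<Sum>i<dim_row A. A $$ (i,i))"

definition psd :: "nat \<Rightarrow> complex mat \<Rightarrow> bool" where
  "psd n A \<longleftrightarrow> A \<in> carrier_mat n n \<and> dagger A = A \<and>
     (\<forall>v \<in> carrier_vec n. 0 \<le> Re (\<Sum>i<n. cnj (v $ i) * (A *\<^sub>v v) $ i))"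

definition density :: "nat \<Rightarrow> complex mat \<Rightarrow> bool" where
  "density n \<rho> \<longleftrightarrow> psd n \<rho> \<and> mtrace \<rho> = 1"

(* POVM element E (outcome "1"); the complementary element is 1 - E *)
definition povm_elt :: "nat \<Rightarrow> complex mat \<Rightarrow> bool" where
  "povm_elt n E \<longleftrightarrow> psd n E \<and> psd n (1\<^sub>m n - E)"

definition sum_mats :: "nat \<Rightarrow> nat \<Rightarrow> complex mat list \<Rightarrow> complex mat" where
  "sum_mats r c Ms = foldr (+) Ms (0\<^sub>m r c)"

definition kraus_channel :: "nat \<Rightarrow> nat \<Rightarrow> complex mat list \<Rightarrow> bool" where
  "kraus_channel n m Ks \<longleftrightarrow> (\<forall>K \<in> set Ks. K \<in> carrier_mat m n) \<and>
     sum_mats n n (map (\<lambda>K. dagger K * K) Ks) = 1\<^sub>m n"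

definition apply_channel :: "nat \<Rightarrow> complex mat list \<Rightarrow> complex mat \<Rightarrow> complex mat" where
  "apply_channel m Ks \<rho> = sum_mats m m (map (\<lambda>K. K * \<rho> * dagger K) Ks)"

definition kron :: "complex mat \<Rightarrow> complex mat \<Rightarrow> complex mat" where
  "kron A B = Matrix.mat (dim_row A * dim_row B) (dim_col A * dim_col B)
     (\<lambda>(i,j). A $$ (i div dim_row B, j div dim_col B) * B $$ (i mod dim_row B, j mod dim_col B))"

definition meas_prob :: "nat \<Rightarrow> complex mat \<Rightarrow> bool \<Rightarrow> complex mat \<Rightarrow> real" where
  "meas_prob n E m \<rho> = (if m then Re (mtrace (E * \<rho>)) else Re (mtrace ((1\<^sub>m n - E) * \<rho>)))"

(* trace distance, variational form  D(rho,sigma) = max_P tr(P(rho - sigma)) over projectors P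
   (Nielsen-Chuang (9.22)) *)
definition trace_distance :: "nat \<Rightarrow> complex mat \<Rightarrow> complex mat \<Rightarrow> real" where
  "trace_distance n \<rho> \<sigma> =
     Sup {Re (mtrace (P * (\<rho> - \<sigma>))) | P. P \<in> carrier_mat n n \<and> dagger P = P \<and> P * P = P}"

(* the QPKE scheme at a fixed security parameter:
   skgen : distribution of sk;  PKGen(sk): classical pk ~ pkgen sk, quantum part rho sk pk
   (dimension dpk);  Enc(.,pk,m): channel enc pk m from dpk to dct;
   Dec(sk,.): two-outcome measurement with outcome-1 element dec sk. *)
definition qpke_correct ::
  "'sk::finite pmf \<Rightarrow> ('sk \<Rightarrow> 'pk::finite pmf) \<Rightarrow> ('sk \<Rightarrow> 'pk \<Rightarrow> complex mat) \<Rightarrow>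
   ('pk \<Rightarrow> bool \<Rightarrow> complex mat list) \<Rightarrow> ('sk \<Rightarrow> complex mat) \<Rightarrow> nat \<Rightarrow> nat \<Rightarrow> bool" where
  "qpke_correct skgen pkgen rho enc dec dpk dct \<longleftrightarrow>
     (\<forall>sk pk. pmf skgen sk > 0 \<and> pmf (pkgen sk) pk > 0 \<longrightarrow> density dpk (rho sk pk)) \<and>
     (\<forall>pk m. kraus_channel dpk dct (enc pk m)) \<and>
     (\<forall>sk. povm_elt dct (dec sk)) \<and>
     (\<forall>m. (\<Sum>sk\<in>UNIV. \<Sum>pk\<in>UNIV. pmf skgen sk * pmf (pkgen sk) pk *
            meas_prob dct (dec sk) m (apply_channel dct (enc pk m) (rho sk pk))) = 1)"

(* output of the everlasting-security experiment: joint state of ct (dim dct) and the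
   adversary's internal register (dim dint); adversary: channel adv pk from dpk to dpk*dint *)
definition exp_out ::
  "'sk::finite pmf \<Rightarrow> ('sk \<Rightarrow> 'pk::finite pmf) \<Rightarrow> ('sk \<Rightarrow> 'pk \<Rightarrow> complex mat) \<Rightarrow>
   ('pk \<Rightarrow> bool \<Rightarrow> complex mat list) \<Rightarrow> nat \<Rightarrow> nat \<Rightarrow> nat \<Rightarrow>
   ('pk \<Rightarrow> complex mat list) \<Rightarrow> bool \<Rightarrow> complex mat" where
  "exp_out skgen pkgen rho enc dpk dct dint adv m =
     Matrix.mat (dct * dint) (dct * dint) (\<lambda>ij. \<Sum>sk\<in>UNIV. \<Sum>pk\<in>UNIV.
        of_real (pmf skgen sk * pmf (pkgen sk) pk) *
        apply_channel (dct * dint) (map (\<lambda>K. kron K (1\<^sub>m dint)) (enc pk m))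
          (apply_channel (dpk * dint) (adv pk) (rho sk pk)) $$ ij)"

end

(*
  The adversary ignores the public-key state.  Fix a public key pk in the support and a key sk
  with positive weight.  Correctness is an average of success probabilities, so decryption under
  sk succeeds with certainty on every ciphertext of pk.  Hence for any vector v in the support of
  the public-key state rho sk pk (found through a Cholesky decomposition of rho sk pk) the
  decryption outcome E annihilates the Kraus images of v under Enc(pk, 0) and 1 - E annihilates
  those under Enc(pk, 1); vectors annihilated by E and by 1 - E are orthogonal.  The adversary
  prepares v tensored with a basis vector |pk> of its internal register.  The labels |pk> make
  the contributions of different public keys orthogonal, so the experiment outputs for m = 0 and
  m = 1 have orthogonal supports, and the projector onto the span of the second (Gram-Schmidt)
  distinguishes them with certainty.
*)

theory Submission
  imports Defs
begin

section \<open>Vectors as functions\<close>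

text \<open>A vector of \<open>\<complex>\<^sup>n\<close> is a function \<open>nat \<Rightarrow> complex\<close>; its values at indices \<open>\<ge> n\<close> are
  irrelevant, so most statements only hold below \<open>n\<close>.\<close>

definition cinner :: "nat \<Rightarrow> (nat \<Rightarrow> complex) \<Rightarrow> (nat \<Rightarrow> complex) \<Rightarrow> complex" where
  "cinner n f g = (\<Sum>i<n. cnj (f i) * g i)"

definition mat_app :: "complex mat \<Rightarrow> nat \<Rightarrow> (nat \<Rightarrow> complex) \<Rightarrow> nat \<Rightarrow> complex" where
  "mat_app A n f = (\<lambda>i. \<Sum>l<n. A $$ (i,l) * f l)"

definition quad_form :: "nat \<Rightarrow> complex mat \<Rightarrow> (nat \<Rightarrow> complex) \<Rightarrow> complex" where
  "quad_form n A f = cinner n f (mat_app A n f)"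

lemma cinner_commute: "cinner n g f = cnj (cinner n f g)"
  unfolding cinner_def by (simp add: cnj_sum mult.commute)

lemma cinner_cong:
  "(\<And>i. i < n \<Longrightarrow> f i = f' i) \<Longrightarrow> (\<And>i. i < n \<Longrightarrow> g i = g' i) \<Longrightarrow> cinner n f g = cinner n f' g'"
  unfolding cinner_def by (rule sum.cong) auto

lemma cinner_zero_left [simp]: "cinner n (\<lambda>_. 0) g = 0"
  unfolding cinner_def by simp

lemma cinner_diff_right: "cinner n f (\<lambda>i. g i - h i) = cinner n f g - cinner n f h"
  unfolding cinner_def by (simp add: right_diff_distrib sum_subtractf)

lemma cinner_diff_left: "cinner n (\<lambda>i. g i - h i) f = cinner n g f - cinner n h f"
  unfolding cinner_def by (simp add: left_diff_distrib sum_subtractf)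

lemma cinner_scale_right: "cinner n f (\<lambda>i. c * g i) = c * cinner n f g"
  unfolding cinner_def by (simp add: sum_distrib_left mult_ac)

lemma cinner_scale_left: "cinner n (\<lambda>i. c * g i) f = cnj c * cinner n g f"
  unfolding cinner_def by (simp add: sum_distrib_left mult_ac)

lemma cinner_sum_right: "cinner n f (\<lambda>i. \<Sum>a\<in>A. c a * g a i) = (\<Sum>a\<in>A. c a * cinner n f (g a))"
  unfolding cinner_def by (simp add: sum_distrib_left mult_ac) (rule sum.swap)

lemma cinner_sum_left: "cinner n (\<lambda>i. \<Sum>a\<in>A. c a * g a i) f = (\<Sum>a\<in>A. cnj (c a) * cinner n (g a) f)"
  unfolding cinner_def by (simp add: cnj_sum sum_distrib_left sum_distrib_right mult_ac) (rule sum.swap)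

lemma cinner_self: "cinner n f f = of_real (\<Sum>i<n. (cmod (f i))\<^sup>2)"
  unfolding cinner_def of_real_sum
  by (intro sum.cong refl) (metis complex_norm_square mult.commute of_real_power)

lemma Re_cinner_self_nonneg: "0 \<le> Re (cinner n f f)"
  unfolding cinner_self by (simp add: sum_nonneg)

lemma cinner_self_eq_0: "cinner n f f = 0 \<Longrightarrow> i < n \<Longrightarrow> f i = 0"
  unfolding cinner_self of_real_eq_0_iff by (subst (asm) sum_nonneg_eq_0_iff) auto

lemma cinner_indicator_left: "i < n \<Longrightarrow> cinner n (\<lambda>l. of_bool (l = i)) f = f i"
  unfolding cinner_def by (subst sum.cong[OF refl, of _ _ "\<lambda>l. if l = i then f l else 0"]) auto

lemma mat_app_indicator: "i < n \<Longrightarrow> mat_app A n (\<lambda>l. of_bool (l = i)) j = A $$ (j,i)"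
  unfolding mat_app_def by (subst sum.cong[OF refl, of _ _ "\<lambda>l. if l = i then A $$ (j,l) else 0"]) auto

lemma mat_app_cong: "(\<And>l. l < n \<Longrightarrow> f l = g l) \<Longrightarrow> mat_app A n f = mat_app A n g"
  unfolding mat_app_def by (intro ext sum.cong) auto

lemma quad_form_cong: "(\<And>l. l < n \<Longrightarrow> f l = g l) \<Longrightarrow> quad_form n A f = quad_form n A g"
  unfolding quad_form_def by (intro cinner_cong) (auto simp: mat_app_cong[of n f g])

lemma mat_app_add_scaled:
  "mat_app A n (\<lambda>l. f l + c * g l) = (\<lambda>i. mat_app A n f i + c * mat_app A n g i)"
  unfolding mat_app_def by (simp add: distrib_left sum.distrib sum_distrib_left mult_ac)

lemma mat_app_scale: "mat_app A n (\<lambda>l. c * f l) = (\<lambda>i. c * mat_app A n f i)"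
  unfolding mat_app_def by (simp add: sum_distrib_left mult_ac)

lemma quad_form_add_scaled:
  "quad_form n A (\<lambda>l. f l + c * g l) =
     quad_form n A f + c * cinner n f (mat_app A n g) + cnj c * cinner n g (mat_app A n f)
       + cnj c * c * quad_form n A g"
  unfolding quad_form_def mat_app_add_scaled
  by (simp add: cinner_def sum.distrib sum_distrib_left ring_distribs mult_ac)

section \<open>Positive semidefinite matrices\<close>

lemma hermitian_entry:
  assumes "A \<in> carrier_mat n n" "dagger A = A" "i < n" "j < n"
  shows "A $$ (j,i) = cnj (A $$ (i,j))"
proof -
  have "dagger A $$ (j,i) = cnj (A $$ (i,j))" using assms(1,3,4) unfolding dagger_def by auto
  then show ?thesis using assms(2) by simp
qed

lemma cinner_mat_app_hermitian:
  assumes "A \<in> carrier_mat n n" "dagger A = A"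
  shows "cinner n f (mat_app A n g) = cinner n (mat_app A n f) g"
proof -
  have "cinner n f (mat_app A n g) = (\<Sum>i<n. \<Sum>l<n. cnj (f i) * A $$ (i,l) * g l)"
    unfolding cinner_def mat_app_def by (simp add: sum_distrib_left mult_ac)
  also have "\<dots> = (\<Sum>l<n. \<Sum>i<n. cnj (A $$ (l,i) * f i) * g l)"
  proof (subst sum.swap, intro sum.cong refl)
    fix l i assume "l \<in> {..<n}" "i \<in> {..<n}"
    then show "cnj (f i) * A $$ (i,l) * g l = cnj (A $$ (l,i) * f i) * g l"
      using hermitian_entry[OF assms, of l i] by simp
  qed
  also have "\<dots> = cinner n (mat_app A n f) g"
    unfolding cinner_def mat_app_def by (simp add: cnj_sum sum_distrib_right)
  finally show ?thesis .
qed

lemma psd_carrier: "psd n A \<Longrightarrow> A \<in> carrier_mat n n"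
  and psd_hermitian: "psd n A \<Longrightarrow> dagger A = A"
  unfolding psd_def by auto

lemma sum_psd_def_eq_quad_form:
  "A \<in> carrier_mat n n \<Longrightarrow> v \<in> carrier_vec n \<Longrightarrow>
     (\<Sum>i<n. cnj (v $ i) * (A *\<^sub>v v) $ i) = quad_form n A (\<lambda>i. v $ i)"
  unfolding quad_form_def cinner_def mat_app_def
  by (intro sum.cong refl) (auto simp: scalar_prod_def atLeast0LessThan intro!: sum.cong)

lemma psd_quad_form_nonneg: "psd n A \<Longrightarrow> 0 \<le> Re (quad_form n A f)"
proof -
  assume A: "psd n A"
  have "quad_form n A (\<lambda>i. Matrix.vec n f $ i) = quad_form n A f"
    by (rule quad_form_cong) simp
  then show ?thesis
    using A sum_psd_def_eq_quad_form[OF psd_carrier[OF A] vec_carrier] unfolding psd_def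
    by (metis vec_carrier)
qed

lemma psdI:
  assumes "A \<in> carrier_mat n n" "dagger A = A" "\<And>f. 0 \<le> Re (quad_form n A f)"
  shows "psd n A"
  unfolding psd_def using assms sum_psd_def_eq_quad_form[OF assms(1)] by auto

text \<open>Expanding the quadratic form along \<open>f - t A f\<close> shows that \<open>\<parallel>A f\<parallel>\<^sup>2\<close> must vanish.\<close>

lemma psd_quad_form_eq_0:
  assumes A: "psd n A" and q: "Re (quad_form n A f) = 0" and i: "i < n"
  shows "mat_app A n f i = 0"
proof -
  define g where "g = mat_app A n f"
  define c where "c = Re (cinner n g g)"
  define d where "d = Re (quad_form n A g)"
  have c: "0 \<le> c" unfolding c_def by (rule Re_cinner_self_nonneg)
  have d: "0 \<le> d" unfolding d_def by (rule psd_quad_form_nonneg[OF A])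
  have herm: "cinner n f (mat_app A n g) = cinner n g g"
    unfolding g_def by (rule cinner_mat_app_hermitian[OF psd_carrier[OF A] psd_hermitian[OF A]])
  have expansion: "0 \<le> - 2 * t * c + t\<^sup>2 * d" for t :: real
  proof -
    have "quad_form n A (\<lambda>l. f l + of_real (- t) * g l) =
        quad_form n A f + of_real (- 2 * t) * cinner n g g + of_real (t\<^sup>2) * quad_form n A g"
      unfolding quad_form_add_scaled herm g_def[symmetric]
      by (simp add: algebra_simps power2_eq_square)
    then have "Re (quad_form n A (\<lambda>l. f l + of_real (- t) * g l)) = - 2 * t * c + t\<^sup>2 * d"
      using q unfolding c_def d_def by simp
    then show ?thesis using psd_quad_form_nonneg[OF A] by metis
  qed
  have "c = 0"
  proof (rule ccontr)
    assume "c \<noteq> 0"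
    then have c0: "0 < c" using c by simp
    define t where "t = c / (d + 1)"
    have t: "0 < t" "t * d < c" unfolding t_def using c0 d by (auto simp: field_simps)
    have "0 \<le> t * (t * d - 2 * c)" using expansion[of t] by (simp add: algebra_simps power2_eq_square)
    moreover have "t * (t * d - 2 * c) < 0" using t c0 by (intro mult_pos_neg) auto
    ultimately show False by simp
  qed
  then have "cinner n g g = 0" unfolding c_def cinner_self by simp
  then show ?thesis unfolding g_def by (rule cinner_self_eq_0[OF _ i])
qed

lemma psd_diag_eq_0_imp_entry_eq_0:
  assumes A: "psd n A" and i: "i < n" and j: "j < n" and Aii: "A $$ (i,i) = 0"
  shows "A $$ (j,i) = 0" and "A $$ (i,j) = 0"
proof -
  have "quad_form n A (\<lambda>l. of_bool (l = i)) = A $$ (i,i)"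
    unfolding quad_form_def cinner_indicator_left[OF i] mat_app_indicator[OF i] ..
  then have "mat_app A n (\<lambda>l. of_bool (l = i)) j = 0"
    using psd_quad_form_eq_0[OF A _ j] Aii by simp
  then show "A $$ (j,i) = 0" unfolding mat_app_indicator[OF i] .
  then show "A $$ (i,j) = 0"
    using hermitian_entry[OF psd_carrier[OF A] psd_hermitian[OF A] j i] by simp
qed

lemma psd_diag_real:
  assumes "psd n A" "i < n"
  shows "A $$ (i,i) = of_real (Re (A $$ (i,i)))" and "0 \<le> Re (A $$ (i,i))"
proof -
  have "A $$ (i,i) = cnj (A $$ (i,i))"
    using hermitian_entry[OF psd_carrier[OF assms(1)] psd_hermitian[OF assms(1)] assms(2,2)] .
  then have "Im (A $$ (i,i)) = 0" by (metis cnj.simps(2) neg_equal_zero)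
  then show "A $$ (i,i) = of_real (Re (A $$ (i,i)))" by (simp add: complex_eq_iff)
  have "quad_form n A (\<lambda>l. of_bool (l = i)) = A $$ (i,i)"
    unfolding quad_form_def cinner_indicator_left[OF assms(2)] mat_app_indicator[OF assms(2)] ..
  then show "0 \<le> Re (A $$ (i,i))" using psd_quad_form_nonneg[OF assms(1)] by metis
qed

text \<open>One step of the Cholesky decomposition.\<close>

definition schur_deflate :: "nat \<Rightarrow> nat \<Rightarrow> complex mat \<Rightarrow> complex mat" where
  "schur_deflate n i A = Matrix.mat n n (\<lambda>(l,m). A $$ (l,m) - A $$ (l,i) * A $$ (i,m) / A $$ (i,i))"

lemma quad_form_schur_deflate:
  assumes A: "psd n A" and i: "i < n"
  shows "quad_form n (schur_deflate n i A) f =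
    quad_form n A (\<lambda>l. f l + (- mat_app A n f i / A $$ (i,i)) * of_bool (l = i))"
proof -
  define \<alpha> where "\<alpha> = A $$ (i,i)"
  define \<beta> where "\<beta> = mat_app A n f i"
  have \<alpha>: "cnj \<alpha> = \<alpha>" unfolding \<alpha>_def using psd_diag_real[OF A i] by (metis complex_cnj_complex_of_real)
  have col_sum: "(\<Sum>l<n. cnj (f l) * A $$ (l,i)) = cnj \<beta>"
    unfolding \<beta>_def mat_app_def cnj_sum
  proof (intro sum.cong refl)
    fix l assume "l \<in> {..<n}"
    then show "cnj (f l) * A $$ (l,i) = cnj (A $$ (i,l) * f l)"
      using hermitian_entry[OF psd_carrier[OF A] psd_hermitian[OF A] i, of l] by simp
  qed
  have col: "cinner n f (mat_app A n (\<lambda>l. of_bool (l = i))) = cnj \<beta>"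
    unfolding col_sum[symmetric] cinner_def mat_app_indicator[OF i] ..
  have row: "cinner n (\<lambda>l. of_bool (l = i)) (mat_app A n f) = \<beta>"
    unfolding \<beta>_def cinner_indicator_left[OF i] ..
  have "quad_form n (schur_deflate n i A) f =
      quad_form n A f - (\<Sum>l<n. cnj (f l) * A $$ (l,i)) * (\<Sum>m<n. A $$ (i,m) * f m) / \<alpha>"
    unfolding quad_form_def cinner_def mat_app_def schur_deflate_def \<alpha>_def
    by (simp add: sum_distrib_left sum_distrib_right sum_subtractf sum_divide_distrib
        right_diff_distrib left_diff_distrib mult_ac)
  also have "\<dots> = quad_form n A f - cnj \<beta> * \<beta> / \<alpha>"
    unfolding col_sum \<beta>_def mat_app_def ..
  also have "\<dots> = quad_form n A (\<lambda>l. f l + (- \<beta> / \<alpha>) * of_bool (l = i))"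
  proof (cases "\<alpha> = 0")
    case False
    have "quad_form n A (\<lambda>l. of_bool (l = i)) = \<alpha>"
      unfolding quad_form_def cinner_indicator_left[OF i] mat_app_indicator[OF i] \<alpha>_def ..
    then show ?thesis unfolding quad_form_add_scaled col row using \<alpha> False by (simp add: field_simps)
  qed (simp add: quad_form_add_scaled col row)
  finally show ?thesis unfolding \<alpha>_def \<beta>_def .
qed

lemma psd_schur_deflate:
  assumes A: "psd n A" and i: "i < n"
  shows "psd n (schur_deflate n i A)"
proof (rule psdI)
  show car: "schur_deflate n i A \<in> carrier_mat n n" unfolding schur_deflate_def by simp
  have herm: "cnj (A $$ (l,m)) = A $$ (m,l)" if "l < n" "m < n" for l m
    using hermitian_entry[OF psd_carrier[OF A] psd_hermitian[OF A] that] by simp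
  have \<alpha>: "cnj (A $$ (i,i)) = A $$ (i,i)"
    using psd_diag_real[OF A i] by (metis complex_cnj_complex_of_real)
  show "dagger (schur_deflate n i A) = schur_deflate n i A"
    by (rule eq_matI) (use i in \<open>auto simp: dagger_def schur_deflate_def herm \<alpha> mult.commute\<close>)
  show "0 \<le> Re (quad_form n (schur_deflate n i A) f)" for f
    unfolding quad_form_schur_deflate[OF A i] by (rule psd_quad_form_nonneg[OF A])
qed

lemma schur_deflate_diag:
  assumes A: "psd n A" and i: "i < n" and l: "l < n" and "l = i \<or> A $$ (l,l) = 0"
  shows "schur_deflate n i A $$ (l,l) = 0"
proof -
  have "A $$ (l,i) = 0" if "A $$ (l,l) = 0" using psd_diag_eq_0_imp_entry_eq_0(2)[OF A l i that] .
  then show ?thesis using assms(4) i l unfolding schur_deflate_def by (cases "A $$ (i,i) = 0") auto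
qed

lemma psd_gram_decomposition:
  "psd n A \<Longrightarrow> \<exists>ws. \<forall>l<n. \<forall>m<n. A $$ (l,m) = (\<Sum>w\<leftarrow>ws. w l * cnj (w m))"
proof (induction "card {l. l < n \<and> A $$ (l,l) \<noteq> 0}" arbitrary: A rule: less_induct)
  case less
  note A = less.prems
  show ?case
  proof (cases "\<exists>i<n. A $$ (i,i) \<noteq> 0")
    case False
    have "A $$ (l,m) = 0" if "l < n" "m < n" for l m
      using psd_diag_eq_0_imp_entry_eq_0(2)[OF A that] False that(1) by blast
    then show ?thesis by (intro exI[of _ "[]"]) simp
  next
    case True
    then obtain i where i: "i < n" "A $$ (i,i) \<noteq> 0" by blast
    define B where "B = schur_deflate n i A"
    have "{l. l < n \<and> B $$ (l,l) \<noteq> 0} \<subset> {l. l < n \<and> A $$ (l,l) \<noteq> 0}"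
      using schur_deflate_diag[OF A i(1)] i unfolding B_def by auto
    then have "card {l. l < n \<and> B $$ (l,l) \<noteq> 0} < card {l. l < n \<and> A $$ (l,l) \<noteq> 0}"
      by (intro psubset_card_mono) auto
    from less.hyps[OF this] psd_schur_deflate[OF A i(1)] obtain ws
      where ws: "\<forall>l<n. \<forall>m<n. B $$ (l,m) = (\<Sum>w\<leftarrow>ws. w l * cnj (w m))"
      unfolding B_def by blast
    define r where "r = sqrt (Re (A $$ (i,i)))"
    define w where "w l = A $$ (l,i) / of_real r" for l
    have rr: "of_real r * of_real r = A $$ (i,i)"
      using psd_diag_real[OF A i(1)] unfolding r_def of_real_mult[symmetric] by simp
    have w: "w l * cnj (w m) = A $$ (l,i) * A $$ (i,m) / A $$ (i,i)" if "m < n" for l m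
      unfolding w_def rr[symmetric]
      using hermitian_entry[OF psd_carrier[OF A] psd_hermitian[OF A] that i(1)] by simp
    show ?thesis
    proof (intro exI[of _ "w # ws"] allI impI)
      fix l m assume lm: "l < n" "m < n"
      then have "A $$ (l,m) - A $$ (l,i) * A $$ (i,m) / A $$ (i,i) = (\<Sum>w\<leftarrow>ws. w l * cnj (w m))"
        using ws unfolding B_def schur_deflate_def by simp
      then show "A $$ (l,m) = (\<Sum>w\<leftarrow>w # ws. w l * cnj (w m))"
        using w[OF lm(2)] by (simp add: diff_eq_eq add.commute)
    qed
  qed
qed

definition is_outer_sum :: "nat \<Rightarrow> complex mat \<Rightarrow> 'a set \<Rightarrow> ('a \<Rightarrow> nat \<Rightarrow> complex) \<Rightarrow> bool" where
  "is_outer_sum n M T y \<longleftrightarrow> M \<in> carrier_mat n n \<and> finite T \<and>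
     (\<forall>i<n. \<forall>j<n. M $$ (i,j) = (\<Sum>t\<in>T. y t i * cnj (y t j)))"

lemma psd_is_outer_sum: "psd n A \<Longrightarrow> \<exists>(T::nat set) y. is_outer_sum n A T y"
proof -
  assume A: "psd n A"
  from psd_gram_decomposition[OF A] obtain ws where "\<forall>l<n. \<forall>m<n. A $$ (l,m) = (\<Sum>w\<leftarrow>ws. w l * cnj (w m))" ..
  then have "is_outer_sum n A {..<length ws} (\<lambda>k. ws ! k)"
    unfolding is_outer_sum_def using psd_carrier[OF A] by (auto simp: sum_list_sum_nth atLeast0LessThan)
  then show ?thesis by blast
qed

section \<open>Channels\<close>

lemma mult_mat_entry:
  assumes "A \<in> carrier_mat r m" "B \<in> carrier_mat m c" "i < r" "j < c"
  shows "(A * B) $$ (i,j) = (\<Sum>l<m. A $$ (i,l) * B $$ (l,j))"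
  using assms by (auto simp: scalar_prod_def atLeast0LessThan intro!: sum.cong)

lemma dagger_carrier: "K \<in> carrier_mat r n \<Longrightarrow> dagger K \<in> carrier_mat n r"
  unfolding dagger_def by auto

lemma dagger_entry: "K \<in> carrier_mat r n \<Longrightarrow> i < n \<Longrightarrow> j < r \<Longrightarrow> dagger K $$ (i,j) = cnj (K $$ (j,i))"
  unfolding dagger_def by auto

lemma sum_mats_carrier_entry:
  assumes "\<forall>M\<in>set Ms. M \<in> carrier_mat r c"
  shows "sum_mats r c Ms \<in> carrier_mat r c \<and>
    (\<forall>i<r. \<forall>j<c. sum_mats r c Ms $$ (i,j) = (\<Sum>k<length Ms. (Ms!k) $$ (i,j)))"
  using assms
proof (induction Ms)
  case (Cons M Ms)
  then show ?case
    unfolding sum_mats_def by (auto simp del: sum.lessThan_Suc simp add: sum.lessThan_Suc_shift)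
qed (auto simp: sum_mats_def)

lemma
  assumes "\<forall>K\<in>set Ks. K \<in> carrier_mat r n" "\<rho> \<in> carrier_mat n n"
  shows apply_channel_carrier: "apply_channel r Ks \<rho> \<in> carrier_mat r r"
    and apply_channel_entry: "i < r \<Longrightarrow> j < r \<Longrightarrow>
      apply_channel r Ks \<rho> $$ (i,j) = (\<Sum>k<length Ks. (Ks!k * \<rho> * dagger (Ks!k)) $$ (i,j))"
proof -
  have "\<forall>M\<in>set (map (\<lambda>K. K * \<rho> * dagger K) Ks). M \<in> carrier_mat r r"
  proof
    fix M assume "M \<in> set (map (\<lambda>K. K * \<rho> * dagger K) Ks)"
    then obtain K where "K \<in> set Ks" "M = K * \<rho> * dagger K" by auto
    then show "M \<in> carrier_mat r r" using assms dagger_carrier[of K r n] by auto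
  qed
  note sum_mats_carrier_entry[OF this, folded apply_channel_def]
  then show "apply_channel r Ks \<rho> \<in> carrier_mat r r"
    and "i < r \<Longrightarrow> j < r \<Longrightarrow>
      apply_channel r Ks \<rho> $$ (i,j) = (\<Sum>k<length Ks. (Ks!k * \<rho> * dagger (Ks!k)) $$ (i,j))"
    by simp_all
qed

lemma sum_rotate3: "(\<Sum>a\<in>A. \<Sum>b\<in>B. \<Sum>c\<in>C. f a b c) = (\<Sum>c\<in>C. \<Sum>a\<in>A. \<Sum>b\<in>B. f a b c)"
proof -
  have "(\<Sum>a\<in>A. \<Sum>b\<in>B. \<Sum>c\<in>C. f a b c) = (\<Sum>a\<in>A. \<Sum>c\<in>C. \<Sum>b\<in>B. f a b c)"
    by (rule sum.cong[OF refl], rule sum.swap)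
  also have "\<dots> = (\<Sum>c\<in>C. \<Sum>a\<in>A. \<Sum>b\<in>B. f a b c)" by (rule sum.swap)
  finally show ?thesis .
qed

lemma mat_app_mult:
  assumes "A \<in> carrier_mat r m" "B \<in> carrier_mat m n" "i < r"
  shows "mat_app A m (mat_app B n f) i = mat_app (A * B) n f i"
proof -
  have "mat_app A m (mat_app B n f) i = (\<Sum>k<n. \<Sum>l<m. A $$ (i,l) * B $$ (l,k) * f k)"
    unfolding mat_app_def by (subst sum.swap) (simp add: sum_distrib_left sum_distrib_right mult_ac)
  also have "\<dots> = mat_app (A * B) n f i"
    unfolding mat_app_def by (intro sum.cong refl) (simp add: mult_mat_entry[OF assms] sum_distrib_right)
  finally show ?thesis .
qed

lemma cinner_mat_app_dagger:
  assumes "K \<in> carrier_mat r n"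
  shows "cinner r (mat_app K n f) g = cinner n f (mat_app (dagger K) r g)"
proof -
  have "cinner r (mat_app K n f) g = (\<Sum>i<r. \<Sum>l<n. cnj (f l) * (cnj (K $$ (i,l)) * g i))"
    unfolding cinner_def mat_app_def by (simp add: cnj_sum sum_distrib_left sum_distrib_right mult_ac)
  also have "\<dots> = cinner n f (mat_app (dagger K) r g)"
    unfolding cinner_def mat_app_def using assms
    by (subst sum.swap) (simp add: dagger_entry sum_distrib_left)
  finally show ?thesis .
qed

lemma mat_app_one: "i < n \<Longrightarrow> mat_app (1\<^sub>m n) n f i = f i"
  unfolding mat_app_def by (subst sum.cong[OF refl, of _ _ "\<lambda>l. if l = i then f l else 0"]) auto

lemma mat_app_sum_mats:
  assumes "\<forall>M\<in>set Ms. M \<in> carrier_mat r n" "i < r"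
  shows "mat_app (sum_mats r n Ms) n f i = (\<Sum>k<length Ms. mat_app (Ms!k) n f i)"
  unfolding mat_app_def using sum_mats_carrier_entry[OF assms(1)] assms(2)
  by (subst sum.swap) (simp add: sum_distrib_right)

lemma kraus_channel_cinner:
  assumes "kraus_channel n r Ks"
  shows "(\<Sum>k<length Ks. cinner r (mat_app (Ks!k) n f) (mat_app (Ks!k) n g)) = cinner n f g"
proof -
  have Ks: "\<forall>K\<in>set Ks. K \<in> carrier_mat r n"
    and one: "sum_mats n n (map (\<lambda>K. dagger K * K) Ks) = 1\<^sub>m n"
    using assms unfolding kraus_channel_def by auto
  have car: "\<forall>M\<in>set (map (\<lambda>K. dagger K * K) Ks). M \<in> carrier_mat n n"
  proof
    fix M assume "M \<in> set (map (\<lambda>K. dagger K * K) Ks)"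
    then obtain K where "K \<in> set Ks" "M = dagger K * K" by auto
    then show "M \<in> carrier_mat n n" using Ks dagger_carrier[of K r n] by auto
  qed
  have "(\<Sum>k<length Ks. cinner r (mat_app (Ks!k) n f) (mat_app (Ks!k) n g))
      = (\<Sum>k<length Ks. cinner n f (mat_app (dagger (Ks!k) * Ks!k) n g))"
  proof (intro sum.cong refl)
    fix k assume "k \<in> {..<length Ks}"
    then have K: "Ks!k \<in> carrier_mat r n" using Ks by simp
    show "cinner r (mat_app (Ks!k) n f) (mat_app (Ks!k) n g) = cinner n f (mat_app (dagger (Ks!k) * Ks!k) n g)"
      unfolding cinner_mat_app_dagger[OF K]
      by (intro cinner_cong refl mat_app_mult[OF dagger_carrier[OF K] K])
  qed
  also have "\<dots> = cinner n f (mat_app (sum_mats n n (map (\<lambda>K. dagger K * K) Ks)) n g)"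
    unfolding cinner_sum_right[of n f "\<lambda>_. 1", simplified, symmetric]
    by (intro cinner_cong refl) (simp add: mat_app_sum_mats[OF car])
  also have "\<dots> = cinner n f g"
    unfolding one by (intro cinner_cong refl mat_app_one)
  finally show ?thesis .
qed

lemma outer_sum_conj_entry:
  assumes K: "K \<in> carrier_mat r n" and M: "is_outer_sum n M T y" and ij: "i < r" "j < r"
  shows "(K * M * dagger K) $$ (i,j) = (\<Sum>t\<in>T. mat_app K n (y t) i * cnj (mat_app K n (y t) j))"
proof -
  have Mc: "M \<in> carrier_mat n n"
    and Me: "\<And>a b. a < n \<Longrightarrow> b < n \<Longrightarrow> M $$ (a,b) = (\<Sum>t\<in>T. y t a * cnj (y t b))"
    using M unfolding is_outer_sum_def by auto
  have "(K * M * dagger K) $$ (i,j) = (\<Sum>b<n. (K * M) $$ (i,b) * cnj (K $$ (j,b)))"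
    using mult_mat_entry[OF mult_carrier_mat[OF K Mc] dagger_carrier[OF K] ij] dagger_entry[OF K _ ij(2)]
    by simp
  also have "\<dots> = (\<Sum>b<n. \<Sum>a<n. \<Sum>t\<in>T. K $$ (i,a) * y t a * (cnj (K $$ (j,b)) * cnj (y t b)))"
    by (intro sum.cong refl)
      (simp add: mult_mat_entry[OF K Mc ij(1)] Me sum_distrib_left sum_distrib_right mult_ac)
  also have "\<dots> = (\<Sum>t\<in>T. \<Sum>b<n. \<Sum>a<n. K $$ (i,a) * y t a * (cnj (K $$ (j,b)) * cnj (y t b)))"
    by (rule sum_rotate3[of _ _ "{..<n}"])
  also have "\<dots> = (\<Sum>t\<in>T. mat_app K n (y t) i * cnj (mat_app K n (y t) j))"
    unfolding mat_app_def cnj_sum sum_product by (subst sum.swap) (simp add: mult_ac)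
  finally show ?thesis .
qed

lemma is_outer_sum_apply_channel:
  assumes Ks: "\<forall>K\<in>set Ks. K \<in> carrier_mat r n" and M: "is_outer_sum n M T y"
  shows "is_outer_sum r (apply_channel r Ks M) ({..<length Ks} \<times> T) (\<lambda>(k,t). mat_app (Ks!k) n (y t))"
proof -
  have Mc: "M \<in> carrier_mat n n" and T: "finite T" using M unfolding is_outer_sum_def by auto
  have "apply_channel r Ks M $$ (i,j) =
      (\<Sum>(k,t)\<in>{..<length Ks} \<times> T. mat_app (Ks!k) n (y t) i * cnj (mat_app (Ks!k) n (y t) j))"
    if "i < r" "j < r" for i j
    unfolding apply_channel_entry[OF Ks Mc that] sum.cartesian_product[symmetric]
    using outer_sum_conj_entry[OF _ M that] Ks by simp
  then show ?thesis
    unfolding is_outer_sum_def using apply_channel_carrier[OF Ks Mc] T by (simp add: case_prod_beta)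
qed

lemma mtrace_mult_outer_sum:
  assumes M: "is_outer_sum n M T y" and A: "A \<in> carrier_mat n n"
  shows "mtrace (A * M) = (\<Sum>t\<in>T. quad_form n A (y t))"
proof -
  have Mc: "M \<in> carrier_mat n n"
    and Me: "\<And>a b. a < n \<Longrightarrow> b < n \<Longrightarrow> M $$ (a,b) = (\<Sum>t\<in>T. y t a * cnj (y t b))"
    using M unfolding is_outer_sum_def by auto
  have "mtrace (A * M) = (\<Sum>i<n. (A * M) $$ (i,i))" unfolding mtrace_def using A by simp
  also have "\<dots> = (\<Sum>i<n. \<Sum>l<n. \<Sum>t\<in>T. cnj (y t i) * (A $$ (i,l) * y t l))"
  proof (intro sum.cong refl)
    fix i assume "i \<in> {..<n}"
    then have i: "i < n" by simp
    show "(A * M) $$ (i,i) = (\<Sum>l<n. \<Sum>t\<in>T. cnj (y t i) * (A $$ (i,l) * y t l))"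
      unfolding mult_mat_entry[OF A Mc i i] using Me i by (simp add: sum_distrib_left mult_ac)
  qed
  also have "\<dots> = (\<Sum>t\<in>T. quad_form n A (y t))"
    unfolding quad_form_def cinner_def mat_app_def by (subst sum_rotate3) (simp add: sum_distrib_left)
  finally show ?thesis .
qed

lemma mtrace_outer_sum:
  assumes "is_outer_sum n M T y"
  shows "mtrace M = (\<Sum>t\<in>T. cinner n (y t) (y t))"
proof -
  have "mtrace M = (\<Sum>i<n. \<Sum>t\<in>T. cnj (y t i) * y t i)"
    using assms unfolding mtrace_def is_outer_sum_def by (auto intro!: sum.cong simp: mult.commute)
  then show ?thesis unfolding cinner_def by (simp add: sum.swap[of _ T])
qed

lemma Re_mtrace_mult_psd_nonneg:
  "psd n W \<Longrightarrow> is_outer_sum n M T y \<Longrightarrow> 0 \<le> Re (mtrace (W * M))"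
  by (simp add: mtrace_mult_outer_sum psd_carrier psd_quad_form_nonneg sum_nonneg)

lemma mtrace_apply_channel:
  assumes Ks: "kraus_channel n r Ks" and M: "is_outer_sum n M T y"
  shows "mtrace (apply_channel r Ks M) = mtrace M"
proof -
  have Kc: "\<forall>K\<in>set Ks. K \<in> carrier_mat r n" using Ks unfolding kraus_channel_def by auto
  have "mtrace (apply_channel r Ks M) =
      (\<Sum>(k,t)\<in>{..<length Ks} \<times> T. cinner r (mat_app (Ks!k) n (y t)) (mat_app (Ks!k) n (y t)))"
    unfolding mtrace_outer_sum[OF is_outer_sum_apply_channel[OF Kc M]] by (rule sum.cong) auto
  also have "\<dots> = (\<Sum>t\<in>T. \<Sum>k<length Ks. cinner r (mat_app (Ks!k) n (y t)) (mat_app (Ks!k) n (y t)))"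
    unfolding sum.cartesian_product[symmetric] by (rule sum.swap)
  also have "\<dots> = mtrace M"
    unfolding kraus_channel_cinner[OF Ks] mtrace_outer_sum[OF M] ..
  finally show ?thesis .
qed

section \<open>Orthonormal bases and projectors\<close>

definition orthonormal :: "nat \<Rightarrow> (nat \<Rightarrow> complex) list \<Rightarrow> bool" where
  "orthonormal n es \<longleftrightarrow> (\<forall>a<length es. \<forall>b<length es. cinner n (es!a) (es!b) = of_bool (a = b))"

definition span_proj :: "nat \<Rightarrow> (nat \<Rightarrow> complex) list \<Rightarrow> (nat \<Rightarrow> complex) \<Rightarrow> nat \<Rightarrow> complex" where
  "span_proj n es x = (\<lambda>i. \<Sum>a<length es. cinner n (es!a) x * (es!a) i)"

lemma cinner_span_proj_right:
  assumes "orthonormal n es" "b < length es"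
  shows "cinner n (es!b) (span_proj n es x) = cinner n (es!b) x"
proof -
  have "cinner n (es!b) (span_proj n es x) = (\<Sum>a<length es. cinner n (es!a) x * of_bool (b = a))"
    unfolding span_proj_def cinner_sum_right using assms unfolding orthonormal_def by simp
  also have "\<dots> = cinner n (es!b) x"
    using assms(2) by (subst sum.cong[OF refl, of _ _ "\<lambda>a. if a = b then cinner n (es!b) x else 0"]) auto
  finally show ?thesis .
qed

lemma cinner_span_proj_right_eq_0:
  "(\<And>a. a < length es \<Longrightarrow> cinner n e (es!a) = 0) \<Longrightarrow> cinner n e (span_proj n es x) = 0"
  unfolding span_proj_def cinner_sum_right by simp

lemma cinner_span_proj_left_eq_0:
  "(\<And>a. a < length es \<Longrightarrow> cinner n (es!a) z = 0) \<Longrightarrow> cinner n (span_proj n es x) z = 0"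
  unfolding span_proj_def cinner_sum_left by simp

lemma span_proj_snoc: "span_proj n (es @ [e]) x i = span_proj n es x i + cinner n e x * e i"
  unfolding span_proj_def by (simp add: nth_append)

lemma orthonormal_snoc:
  assumes "orthonormal n es" "cinner n e e = 1" "\<And>a. a < length es \<Longrightarrow> cinner n (es!a) e = 0"
  shows "orthonormal n (es @ [e])"
proof -
  have "cinner n e (es!a) = 0" if "a < length es" for a
    using assms(3)[OF that] cinner_commute[of n e "es!a"] by simp
  then show ?thesis
    using assms unfolding orthonormal_def by (auto simp: nth_append less_Suc_eq)
qed

lemma gram_schmidt:
  "\<exists>es. orthonormal n es \<and> (\<forall>x\<in>set xs. \<forall>i<n. span_proj n es x i = x i) \<and>
     (\<forall>z. (\<forall>x\<in>set xs. cinner n x z = 0) \<longrightarrow> (\<forall>a<length es. cinner n (es!a) z = 0))"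
proof (induction xs)
  case Nil
  show ?case by (intro exI[of _ "[]"]) (simp add: orthonormal_def)
next
  case (Cons x xs)
  then obtain es where ON: "orthonormal n es"
    and spans: "\<forall>y\<in>set xs. \<forall>i<n. span_proj n es y i = y i"
    and orth: "\<forall>z. (\<forall>y\<in>set xs. cinner n y z = 0) \<longrightarrow> (\<forall>a<length es. cinner n (es!a) z = 0)"
    by blast
  define r where "r i = x i - span_proj n es x i" for i
  have r_orth: "cinner n (es!a) r = 0" if "a < length es" for a
    unfolding r_def cinner_diff_right cinner_span_proj_right[OF ON that] by simp
  show ?case
  proof (cases "cinner n r r = 0")
    case True
    then have "span_proj n es x i = x i" if "i < n" for i
      using cinner_self_eq_0[OF True that] unfolding r_def by simp
    then show ?thesis using ON spans orth by (intro exI[of _ es]) auto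
  next
    case False
    define c where "c = sqrt (Re (cinner n r r))"
    have rr: "cinner n r r = of_real c * of_real c"
      unfolding c_def cinner_self by (simp add: sum_nonneg flip: of_real_mult)
    then have c: "c \<noteq> 0" using False by auto
    define e where "e i = (1 / of_real c) * r i" for i
    have e_es: "cinner n (es!a) e = 0" if "a < length es" for a
      unfolding e_def cinner_scale_right r_orth[OF that] by simp
    have es_e: "cinner n e (es!a) = 0" if "a < length es" for a
      using e_es[OF that] cinner_commute[of n e "es!a"] by simp
    have ee: "cinner n e e = 1"
      unfolding e_def cinner_scale_left cinner_scale_right rr using c by simp
    have ex: "cinner n e x = of_real c"
    proof -
      have "cinner n e x = cinner n e r + cinner n e (span_proj n es x)"
        unfolding r_def cinner_diff_right by simp
      also have "\<dots> = of_real c"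
        using cinner_span_proj_right_eq_0[OF es_e, of x] c
        unfolding e_def cinner_scale_left rr by simp
      finally show ?thesis .
    qed
    show ?thesis
    proof (intro exI[of _ "es @ [e]"] conjI allI impI ballI)
      show "orthonormal n (es @ [e])" by (rule orthonormal_snoc[OF ON ee e_es])
    next
      fix y i assume y: "y \<in> set (x # xs)" and i: "i < n"
      show "span_proj n (es @ [e]) y i = y i"
      proof (cases "y = x")
        case True
        show ?thesis unfolding True span_proj_snoc ex using c by (simp add: e_def r_def)
      next
        case False
        then have y: "y \<in> set xs" using y by simp
        have "cinner n e y = cinner n e (span_proj n es y)"
          using spans y by (intro cinner_cong) auto
        then show ?thesis
          using cinner_span_proj_right_eq_0[OF es_e, of y] spans y i unfolding span_proj_snoc by simp
      qed
    next
      fix z a assume z: "\<forall>y\<in>set (x # xs). cinner n y z = 0" and a: "a < length (es @ [e])"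
      have old: "\<forall>a<length es. cinner n (es!a) z = 0" using orth z by simp
      have "cinner n r z = 0"
        using cinner_span_proj_left_eq_0[of es n z x] old z unfolding r_def cinner_diff_left by simp
      then have "cinner n e z = 0" unfolding e_def cinner_scale_left by simp
      then show "cinner n ((es @ [e]) ! a) z = 0" using old a by (auto simp: nth_append less_Suc_eq)
    qed
  qed
qed

definition projector :: "nat \<Rightarrow> complex mat \<Rightarrow> bool" where
  "projector n P \<longleftrightarrow> P \<in> carrier_mat n n \<and> dagger P = P \<and> P * P = P"

lemma quad_form_projector:
  assumes "projector n P"
  shows "quad_form n P f = cinner n (mat_app P n f) (mat_app P n f)"
proof -
  have P: "P \<in> carrier_mat n n" "dagger P = P" "P * P = P" using assms unfolding projector_def by auto
  have "quad_form n P f = cinner n f (mat_app P n (mat_app P n f))"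
    unfolding quad_form_def using mat_app_mult[OF P(1) P(1)] P(3) by (intro cinner_cong) auto
  then show ?thesis unfolding cinner_mat_app_hermitian[OF P(1,2)] .
qed

lemma projector_psd: "projector n P \<Longrightarrow> psd n P"
  by (intro psdI) (auto simp: projector_def quad_form_projector Re_cinner_self_nonneg)

lemma projector_one_minus:
  assumes "projector n P"
  shows "projector n (1\<^sub>m n - P)"
proof -
  have P: "P \<in> carrier_mat n n" "dagger P = P" "P * P = P" using assms unfolding projector_def by auto
  have "dagger (1\<^sub>m n - P) = 1\<^sub>m n - P"
  proof (rule eq_matI)
    fix i j assume "i < dim_row (1\<^sub>m n - P)" "j < dim_col (1\<^sub>m n - P)"
    then have ij: "i < n" "j < n" using P by auto
    have "1\<^sub>m n - P \<in> carrier_mat n n" using minus_carrier_mat[OF P(1)] .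
    then show "dagger (1\<^sub>m n - P) $$ (i,j) = (1\<^sub>m n - P) $$ (i,j)"
      using dagger_entry[of "1\<^sub>m n - P" n n i j] hermitian_entry[OF P(1,2) ij] P(1) ij by auto
  qed (use P in \<open>auto simp: dagger_def\<close>)
  moreover have "(1\<^sub>m n - P) * (1\<^sub>m n - P) = 1\<^sub>m n - P"
  proof -
    have c: "1\<^sub>m n - P \<in> carrier_mat n n" using minus_carrier_mat[OF P(1)] .
    have "(1\<^sub>m n - P) * (1\<^sub>m n - P) = (1\<^sub>m n - P) - (P * 1\<^sub>m n - P * P)"
      using minus_mult_distrib_mat[OF one_carrier_mat P(1) c] mult_minus_distrib_mat[OF P(1) one_carrier_mat P(1)]
        left_mult_one_mat[OF c] by simp
    then show ?thesis using P by (intro eq_matI) auto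
  qed
  ultimately show ?thesis unfolding projector_def using P by auto
qed

lemma povm_elt_projector: "projector n P \<Longrightarrow> povm_elt n P"
  unfolding povm_elt_def by (simp add: projector_psd projector_one_minus)

definition span_projector :: "nat \<Rightarrow> (nat \<Rightarrow> complex) list \<Rightarrow> complex mat" where
  "span_projector n es = Matrix.mat n n (\<lambda>(i,j). \<Sum>a<length es. (es!a) i * cnj ((es!a) j))"

lemma mat_app_span_projector: "i < n \<Longrightarrow> mat_app (span_projector n es) n x i = span_proj n es x i"
  unfolding mat_app_def span_projector_def span_proj_def cinner_def
  by (simp add: sum_distrib_left sum_distrib_right mult_ac) (rule sum.swap)

lemma span_proj_cong:
  "(\<And>i. i < n \<Longrightarrow> x i = x' i) \<Longrightarrow> span_proj n es x = span_proj n es x'"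
  unfolding span_proj_def by (simp add: cinner_cong[of n _ _ x x'])

lemma span_proj_idem:
  assumes "orthonormal n es"
  shows "span_proj n es (span_proj n es x) = span_proj n es x"
proof
  fix i
  have "span_proj n es (span_proj n es x) i = (\<Sum>a<length es. cinner n (es!a) (span_proj n es x) * (es!a) i)"
    by (simp only: span_proj_def[of n es "span_proj n es x"])
  also have "\<dots> = (\<Sum>a<length es. cinner n (es!a) x * (es!a) i)"
    using cinner_span_proj_right[OF assms] by (intro sum.cong) auto
  also have "\<dots> = span_proj n es x i" by (simp add: span_proj_def)
  finally show "span_proj n es (span_proj n es x) i = span_proj n es x i" .
qed

lemma projector_span_projector:
  assumes ON: "orthonormal n es"
  shows "projector n (span_projector n es)"
proof -
  let ?P = "span_projector n es"
  have car: "?P \<in> carrier_mat n n" unfolding span_projector_def by simp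
  have herm: "dagger ?P = ?P"
    by (rule eq_matI) (auto simp: dagger_def span_projector_def cnj_sum mult.commute)
  have "(?P * ?P) $$ (i,j) = ?P $$ (i,j)" if ij: "i < n" "j < n" for i j
  proof -
    let ?\<delta> = "\<lambda>l. of_bool (l = j)"
    have "(?P * ?P) $$ (i,j) = mat_app ?P n (mat_app ?P n ?\<delta>) i"
      unfolding mat_app_mult[OF car car ij(1)] mat_app_indicator[OF ij(2)] ..
    also have "\<dots> = span_proj n es (span_proj n es ?\<delta>) i"
      unfolding mat_app_span_projector[OF ij(1)]
      by (rule arg_cong[of _ _ "\<lambda>x. x i"], rule span_proj_cong) (rule mat_app_span_projector)
    also have "\<dots> = ?P $$ (i,j)"
      unfolding span_proj_idem[OF ON] mat_app_span_projector[OF ij(1), symmetric]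
      by (rule mat_app_indicator[OF ij(2)])
    finally show ?thesis .
  qed
  then have "?P * ?P = ?P" using car by (intro eq_matI) auto
  then show ?thesis unfolding projector_def using car herm by auto
qed

section \<open>Perfect distinguishability\<close>

lemma ex_projector_separating:
  assumes T1: "finite T1" and orth: "\<And>t t'. t \<in> T1 \<Longrightarrow> t' \<in> T0 \<Longrightarrow> cinner n (y1 t) (y0 t') = 0"
  shows "\<exists>P. projector n P \<and> (\<forall>t\<in>T1. \<forall>i<n. mat_app P n (y1 t) i = y1 t i) \<and>
    (\<forall>t\<in>T0. \<forall>i<n. mat_app P n (y0 t) i = 0)"
proof -
  obtain xs where xs: "set xs = y1 ` T1" using finite_list[OF finite_imageI[OF T1, of y1]] by blast
  obtain es where ON: "orthonormal n es"
    and spans: "\<forall>x\<in>set xs. \<forall>i<n. span_proj n es x i = x i"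
    and orth_es: "\<forall>z. (\<forall>x\<in>set xs. cinner n x z = 0) \<longrightarrow> (\<forall>a<length es. cinner n (es!a) z = 0)"
    using gram_schmidt[of n xs] by blast
  show ?thesis
  proof (intro exI[of _ "span_projector n es"] conjI ballI allI impI)
    show "projector n (span_projector n es)" by (rule projector_span_projector[OF ON])
  next
    fix t i assume "t \<in> T1" "i < n"
    then show "mat_app (span_projector n es) n (y1 t) i = y1 t i"
      using spans xs unfolding mat_app_span_projector[OF \<open>i < n\<close>] by blast
  next
    fix t i assume t: "t \<in> T0" and i: "i < n"
    have "\<forall>x\<in>set xs. cinner n x (y0 t) = 0" unfolding xs using orth t by auto
    then have "\<forall>a<length es. cinner n (es!a) (y0 t) = 0" using orth_es by blast
    then show "mat_app (span_projector n es) n (y0 t) i = 0"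
      unfolding mat_app_span_projector[OF i] span_proj_def by simp
  qed
qed

lemma mtrace_mult_outer_sum_eigen:
  assumes M: "is_outer_sum n M T y" and P: "P \<in> carrier_mat n n"
    and eigen: "\<forall>t\<in>T. \<forall>i<n. mat_app P n (y t) i = c * y t i"
  shows "mtrace (P * M) = c * mtrace M"
proof -
  have "quad_form n P (y t) = c * cinner n (y t) (y t)" if "t \<in> T" for t
    unfolding quad_form_def cinner_scale_right[symmetric] using eigen that by (intro cinner_cong) auto
  then show ?thesis
    unfolding mtrace_mult_outer_sum[OF M P] mtrace_outer_sum[OF M] sum_distrib_left by simp
qed

lemma mtrace_diff: "A \<in> carrier_mat n n \<Longrightarrow> B \<in> carrier_mat n n \<Longrightarrow> mtrace (A - B) = mtrace A - mtrace B"
  unfolding mtrace_def by (simp add: sum_subtractf)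

lemma mtrace_mult_diff:
  "Q \<in> carrier_mat n n \<Longrightarrow> A \<in> carrier_mat n n \<Longrightarrow> B \<in> carrier_mat n n \<Longrightarrow>
    mtrace (Q * (A - B)) = mtrace (Q * A) - mtrace (Q * B)"
  using mult_minus_distrib_mat[of Q n n A n B] mtrace_diff[of "Q * A" n "Q * B"] by simp

lemma mtrace_one_minus_mult:
  "Q \<in> carrier_mat n n \<Longrightarrow> M \<in> carrier_mat n n \<Longrightarrow> mtrace ((1\<^sub>m n - Q) * M) = mtrace M - mtrace (Q * M)"
  using minus_mult_distrib_mat[OF one_carrier_mat, of Q n M n] mtrace_diff[of M n "Q * M"] by simp

lemma trace_distance_eq_1:
  assumes \<rho>0: "is_outer_sum n \<rho>0 T0 y0" "mtrace \<rho>0 = 1"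
    and \<rho>1: "is_outer_sum n \<rho>1 T1 y1" "mtrace \<rho>1 = 1"
    and P: "projector n P" "mtrace (P * \<rho>0) = 1" "mtrace (P * \<rho>1) = 0"
  shows "trace_distance n \<rho>0 \<rho>1 = 1"
  unfolding trace_distance_def projector_def[symmetric]
proof (rule cSup_eq_maximum)
  have c: "\<rho>0 \<in> carrier_mat n n" "\<rho>1 \<in> carrier_mat n n" "P \<in> carrier_mat n n"
    using \<rho>0 \<rho>1 P unfolding is_outer_sum_def projector_def by auto
  have "Re (mtrace (P * (\<rho>0 - \<rho>1))) = 1"
    unfolding mtrace_mult_diff[OF c(3,1,2)] P(2,3) by simp
  then show "1 \<in> {Re (mtrace (Q * (\<rho>0 - \<rho>1))) |Q. projector n Q}"
    using P(1) by (intro CollectI exI[of _ P]) simp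
next
  fix x assume "x \<in> {Re (mtrace (Q * (\<rho>0 - \<rho>1))) |Q. projector n Q}"
  then obtain Q where x: "x = Re (mtrace (Q * (\<rho>0 - \<rho>1)))" and Q: "projector n Q" by blast
  have c: "\<rho>0 \<in> carrier_mat n n" "\<rho>1 \<in> carrier_mat n n" "Q \<in> carrier_mat n n"
    using \<rho>0 \<rho>1 Q unfolding is_outer_sum_def projector_def by auto
  have "0 \<le> Re (mtrace ((1\<^sub>m n - Q) * \<rho>0))"
    by (rule Re_mtrace_mult_psd_nonneg[OF projector_psd[OF projector_one_minus[OF Q]] \<rho>0(1)])
  moreover have "0 \<le> Re (mtrace (Q * \<rho>1))"
    by (rule Re_mtrace_mult_psd_nonneg[OF projector_psd[OF Q] \<rho>1(1)])
  ultimately show "x \<le> 1"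
    unfolding x mtrace_mult_diff[OF c(3,1,2)] using mtrace_one_minus_mult[OF c(3,1)] \<rho>0(2) by simp
qed

lemma orthogonal_states_distinguishable:
  assumes \<rho>0: "is_outer_sum n \<rho>0 T0 y0" "mtrace \<rho>0 = 1"
    and \<rho>1: "is_outer_sum n \<rho>1 T1 y1" "mtrace \<rho>1 = 1"
    and orth: "\<And>t t'. t \<in> T1 \<Longrightarrow> t' \<in> T0 \<Longrightarrow> cinner n (y1 t) (y0 t') = 0"
  shows "trace_distance n \<rho>0 \<rho>1 = 1"
    and "\<exists>E. povm_elt n E \<and> (\<forall>m. meas_prob n E m (if m then \<rho>1 else \<rho>0) = 1)"
proof -
  have T1: "finite T1" and c: "\<rho>0 \<in> carrier_mat n n" "\<rho>1 \<in> carrier_mat n n"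
    using \<rho>0 \<rho>1 unfolding is_outer_sum_def by auto
  from ex_projector_separating[of T1 T0 n y1 y0, OF T1 orth] obtain P where P: "projector n P"
    and fix1: "\<forall>t\<in>T1. \<forall>i<n. mat_app P n (y1 t) i = y1 t i"
    and kill0: "\<forall>t\<in>T0. \<forall>i<n. mat_app P n (y0 t) i = 0"
    by blast
  have Pc: "P \<in> carrier_mat n n" using P unfolding projector_def by simp
  have P1: "mtrace (P * \<rho>1) = 1" using mtrace_mult_outer_sum_eigen[OF \<rho>1(1) Pc, of 1] fix1 \<rho>1(2) by simp
  have P0: "mtrace (P * \<rho>0) = 0" using mtrace_mult_outer_sum_eigen[OF \<rho>0(1) Pc, of 0] kill0 by simp
  have Q: "projector n (1\<^sub>m n - P)" by (rule projector_one_minus[OF P])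
  show "trace_distance n \<rho>0 \<rho>1 = 1"
    by (rule trace_distance_eq_1[OF \<rho>0 \<rho>1 Q])
      (simp_all add: mtrace_one_minus_mult[OF Pc] c P0 P1 \<rho>0(2) \<rho>1(2))
  have "meas_prob n P m (if m then \<rho>1 else \<rho>0) = 1" for m
    by (cases m) (simp_all add: meas_prob_def mtrace_one_minus_mult[OF Pc c(1)] P0 P1 \<rho>0(2))
  then show "\<exists>E. povm_elt n E \<and> (\<forall>m. meas_prob n E m (if m then \<rho>1 else \<rho>0) = 1)"
    using povm_elt_projector[OF P] by blast
qed

lemma mat_app_one_minus:
  "E \<in> carrier_mat n n \<Longrightarrow> i < n \<Longrightarrow> mat_app (1\<^sub>m n - E) n f i = f i - mat_app E n f i"
  using mat_app_one[of i n f]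
  by (simp add: mat_app_def left_diff_distrib sum_subtractf)

lemma cinner_eq_0_if_annihilated:
  assumes E: "psd n E" and f: "\<And>i. i < n \<Longrightarrow> mat_app E n f i = 0"
    and g: "\<And>i. i < n \<Longrightarrow> mat_app (1\<^sub>m n - E) n g i = 0"
  shows "cinner n f g = 0"
proof -
  have "cinner n f g = cinner n f (mat_app E n g)"
    using g mat_app_one_minus[OF psd_carrier[OF E]] by (intro cinner_cong) auto
  also have "\<dots> = cinner n (mat_app E n f) g"
    by (rule cinner_mat_app_hermitian[OF psd_carrier[OF E] psd_hermitian[OF E]])
  also have "\<dots> = 0" using f by (simp add: cinner_cong[of n "mat_app E n f" "\<lambda>_. 0" g g])
  finally show ?thesis .
qed

lemma Re_mtrace_channel_eq_0_imp_annihilated: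
  assumes W: "psd r W" and Ks: "kraus_channel n r Ks" and M: "is_outer_sum n M T y"
    and z: "Re (mtrace (W * apply_channel r Ks M)) = 0"
    and k: "k < length Ks" and t: "t \<in> T" and i: "i < r"
  shows "mat_app W r (mat_app (Ks!k) n (y t)) i = 0"
proof -
  let ?Y = "\<lambda>(k,t). mat_app (Ks!k) n (y t)"
  have Kc: "\<forall>K\<in>set Ks. K \<in> carrier_mat r n" using Ks unfolding kraus_channel_def by auto
  note out = is_outer_sum_apply_channel[OF Kc M]
  have fin: "finite ({..<length Ks} \<times> T)" using out unfolding is_outer_sum_def by simp
  have "(\<Sum>p\<in>{..<length Ks} \<times> T. Re (quad_form r W (?Y p))) = 0"
    using z unfolding mtrace_mult_outer_sum[OF out psd_carrier[OF W]] by simp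
  then have "\<forall>p\<in>{..<length Ks} \<times> T. Re (quad_form r W (?Y p)) = 0"
    using sum_nonneg_eq_0_iff[OF fin, of "\<lambda>p. Re (quad_form r W (?Y p))"] psd_quad_form_nonneg[OF W]
    by simp
  then have "Re (quad_form r W (?Y (k,t))) = 0" using k t by blast
  then show ?thesis using psd_quad_form_eq_0[OF W _ i] by simp
qed

lemma ex_unit_vector_separating_channels:
  assumes \<rho>: "density n \<rho>" and K0: "kraus_channel n r K0s" and K1: "kraus_channel n r K1s"
    and E: "povm_elt r E"
    and z0: "Re (mtrace (E * apply_channel r K0s \<rho>)) = 0"
    and z1: "Re (mtrace ((1\<^sub>m r - E) * apply_channel r K1s \<rho>)) = 0"
  shows "\<exists>v. cinner n v v = 1 \<and> (\<forall>k0<length K0s. \<forall>k1<length K1s.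
           cinner r (mat_app (K0s!k0) n v) (mat_app (K1s!k1) n v) = 0)"
proof -
  obtain T :: "nat set" and y where M: "is_outer_sum n \<rho> T y"
    using psd_is_outer_sum[of n \<rho>] \<rho> unfolding density_def by blast
  have "(\<Sum>t\<in>T. cinner n (y t) (y t)) = 1"
    using \<rho> unfolding density_def mtrace_outer_sum[OF M] by simp
  then have "\<not> (\<forall>t\<in>T. cinner n (y t) (y t) = 0)" using sum.neutral[of T] by force
  then obtain t where t: "t \<in> T" and yt: "cinner n (y t) (y t) \<noteq> 0" by blast
  define c where "c = sqrt (Re (cinner n (y t) (y t)))"
  have cc: "cinner n (y t) (y t) = of_real c * of_real c"
    unfolding c_def cinner_self by (simp add: sum_nonneg flip: of_real_mult)
  then have c: "c \<noteq> 0" using yt by auto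
  define v where "v i = (1 / of_real c) * y t i" for i
  have "cinner n v v = 1" unfolding v_def cinner_scale_left cinner_scale_right cc using c by simp
  moreover have "cinner r (mat_app (K0s!k0) n v) (mat_app (K1s!k1) n v) = 0"
    if k0: "k0 < length K0s" and k1: "k1 < length K1s" for k0 k1
  proof -
    have E': "psd r E" using E unfolding povm_elt_def by simp
    have "cinner r (mat_app (K0s!k0) n (y t)) (mat_app (K1s!k1) n (y t)) = 0"
      using Re_mtrace_channel_eq_0_imp_annihilated[OF E' K0 M z0 k0 t]
        Re_mtrace_channel_eq_0_imp_annihilated[OF _ K1 M z1 k1 t] E
      unfolding povm_elt_def by (intro cinner_eq_0_if_annihilated[OF E']) auto
    then show ?thesis
      unfolding v_def mat_app_scale[of _ n "1 / of_real c"] cinner_scale_left cinner_scale_right by simp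
  qed
  ultimately show ?thesis by blast
qed

lemma sum_weighted_eq_1_imp:
  fixes w p :: "'a \<Rightarrow> real"
  assumes "finite A" "\<And>a. a \<in> A \<Longrightarrow> 0 \<le> w a" "sum w A = 1" "(\<Sum>a\<in>A. w a * p a) = 1"
    and "\<And>a. a \<in> A \<Longrightarrow> 0 < w a \<Longrightarrow> p a \<le> 1" and "a \<in> A" "0 < w a"
  shows "p a = 1"
proof -
  have nonneg: "0 \<le> w b * (1 - p b)" if "b \<in> A" for b
    using assms(2,5)[OF that] by (cases "w b = 0") auto
  have "(\<Sum>b\<in>A. w b * (1 - p b)) = 0"
    using assms(3,4) by (simp add: right_diff_distrib sum_subtractf)
  then have "w a * (1 - p a) = 0"
    using sum_nonneg_eq_0_iff[OF assms(1), of "\<lambda>b. w b * (1 - p b)"] nonneg assms(6) by simp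
  then show ?thesis using assms(7) by simp
qed

lemma meas_prob_nonneg:
  "povm_elt n E \<Longrightarrow> is_outer_sum n X T y \<Longrightarrow> 0 \<le> meas_prob n E m X"
  unfolding meas_prob_def povm_elt_def using Re_mtrace_mult_psd_nonneg by auto

lemma meas_prob_not:
  assumes "E \<in> carrier_mat n n" "X \<in> carrier_mat n n" "mtrace X = 1"
  shows "meas_prob n E (\<not> m) X = 1 - meas_prob n E m X"
  unfolding meas_prob_def using mtrace_one_minus_mult[OF assms(1,2)] assms(3) by simp

section \<open>The internal register\<close>

lemma sum_lessThan_mult:
  fixes n d :: nat
  shows "(\<Sum>l<n * d. g l) = (\<Sum>a<n. \<Sum>b<d. (g (a * d + b) :: 'a::comm_monoid_add))"
proof -
  have split: "(\<Sum>l<m + k. g l) = (\<Sum>l<m. g l) + (\<Sum>b<k. g (m + b))" for m k :: nat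
    by (induction k) (simp_all add: add_ac)
  show ?thesis
    by (induction n) (simp_all add: split[of _ d, simplified add.commute[of _ d]] add.commute)
qed

text \<open>\<open>tensor_ket d j v\<close> is \<open>v \<otimes> |j\<rangle>\<close> with a \<open>d\<close>-dimensional second factor, in the index
  convention of \<open>kron\<close>: entry \<open>a * d + b\<close> of \<open>v \<otimes> w\<close> is \<open>v\<^sub>a w\<^sub>b\<close>.\<close>

definition tensor_ket :: "nat \<Rightarrow> nat \<Rightarrow> (nat \<Rightarrow> complex) \<Rightarrow> nat \<Rightarrow> complex" where
  "tensor_ket d j v = (\<lambda>i. if i mod d = j then v (i div d) else 0)"

lemma cinner_tensor_ket:
  assumes "j < d" "j' < d"
  shows "cinner (n * d) (tensor_ket d j f) (tensor_ket d j' g) = (if j = j' then cinner n f g else 0)"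
proof -
  have "cinner (n * d) (tensor_ket d j f) (tensor_ket d j' g) =
      (\<Sum>a<n. \<Sum>b<d. if b = j \<and> b = j' then cnj (f a) * g a else 0)"
    unfolding cinner_def sum_lessThan_mult tensor_ket_def using assms by (intro sum.cong refl) auto
  also have "\<dots> = (if j = j' then cinner n f g else 0)"
    unfolding cinner_def using assms by (cases "j = j'") (simp_all cong: conj_cong)
  finally show ?thesis .
qed

lemma kron_one_entry:
  assumes "K \<in> carrier_mat r n" "i < r * d" "l < n * d"
  shows "kron K (1\<^sub>m d) $$ (i,l) = (if i mod d = l mod d then K $$ (i div d, l div d) else 0)"
proof -
  have "0 < d" using assms(2) by (cases d) auto
  then show ?thesis unfolding kron_def using assms by auto
qed

lemma kron_one_carrier: "K \<in> carrier_mat r n \<Longrightarrow> kron K (1\<^sub>m d) \<in> carrier_mat (r * d) (n * d)"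
  unfolding kron_def by auto

lemma mat_app_kron_one_tensor_ket:
  assumes K: "K \<in> carrier_mat r n" and j: "j < d" and i: "i < r * d"
  shows "mat_app (kron K (1\<^sub>m d)) (n * d) (tensor_ket d j v) i = tensor_ket d j (mat_app K n v) i"
proof -
  have inner: "(\<Sum>b<d. if i mod d = b \<and> b = j then x else 0) = (if i mod d = j then x else 0)" for x :: complex
    using j by (cases "i mod d = j") (auto simp: eq_commute[of _ j] cong: conj_cong)
  have "mat_app (kron K (1\<^sub>m d)) (n * d) (tensor_ket d j v) i =
      (\<Sum>a<n. \<Sum>b<d. if i mod d = b \<and> b = j then K $$ (i div d, a) * v a else 0)"
  proof (unfold mat_app_def sum_lessThan_mult, intro sum.cong refl)
    fix a b assume a: "a \<in> {..<n}" and b: "b \<in> {..<d}"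
    have "a * d + b < Suc a * d" using b by simp
    also have "\<dots> \<le> n * d" using a by (intro mult_right_mono) auto
    finally have l: "a * d + b < n * d" .
    have "(a * d + b) div d = a" "(a * d + b) mod d = b" using b by auto
    then show "kron K (1\<^sub>m d) $$ (i, a * d + b) * tensor_ket d j v (a * d + b) =
        (if i mod d = b \<and> b = j then K $$ (i div d, a) * v a else 0)"
      unfolding kron_one_entry[OF K i l] tensor_ket_def by auto
  qed
  also have "\<dots> = tensor_ket d j (mat_app K n v) i"
    unfolding inner tensor_ket_def mat_app_def by (simp add: if_distrib cong: if_cong)
  finally show ?thesis .
qed

definition prepare_channel :: "nat \<Rightarrow> nat \<Rightarrow> (nat \<Rightarrow> complex) \<Rightarrow> complex mat list" where
  "prepare_channel n N u = map (\<lambda>b. Matrix.mat N n (\<lambda>(i,c). if c = b then u i else 0)) [0..<n]"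

lemma prepare_channel_carrier: "\<forall>K\<in>set (prepare_channel n N u). K \<in> carrier_mat N n"
  unfolding prepare_channel_def by auto

lemma kraus_channel_prepare_channel:
  assumes u: "cinner N u u = 1"
  shows "kraus_channel n N (prepare_channel n N u)"
proof -
  define K where "K b = Matrix.mat N n (\<lambda>(i,c). if c = b then u i else 0)" for b
  have Kc: "K b \<in> carrier_mat N n" for b unfolding K_def by simp
  have Kd: "dagger (K b) $$ (c,i) = (if c = b then cnj (u i) else 0)" if "c < n" "i < N" for b c i
    using dagger_entry[OF Kc that] that by (simp add: K_def)
  have K: "K b $$ (i,c) = (if c = b then u i else 0)" if "i < N" "c < n" for b c i
    using that unfolding K_def by simp
  have car: "\<forall>M\<in>set (map (\<lambda>K. dagger K * K) (prepare_channel n N u)). M \<in> carrier_mat n n"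
    unfolding prepare_channel_def K_def[symmetric] using mult_carrier_mat[OF dagger_carrier[OF Kc] Kc] by auto
  have "sum_mats n n (map (\<lambda>K. dagger K * K) (prepare_channel n N u)) $$ (c,c') = 1\<^sub>m n $$ (c,c')"
    if cc: "c < n" "c' < n" for c c'
  proof -
    have "sum_mats n n (map (\<lambda>K. dagger K * K) (prepare_channel n N u)) $$ (c,c') =
        (\<Sum>b<n. (dagger (K b) * K b) $$ (c,c'))"
      using sum_mats_carrier_entry[OF car] cc unfolding prepare_channel_def K_def[symmetric] by simp
    also have "\<dots> = (\<Sum>b<n. if c = b \<and> c' = b then cinner N u u else 0)"
    proof (intro sum.cong refl)
      fix b
      show "(dagger (K b) * K b) $$ (c,c') = (if c = b \<and> c' = b then cinner N u u else 0)"
        unfolding mult_mat_entry[OF dagger_carrier[OF Kc] Kc cc] cinner_def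
        using cc by (cases "c = b"; cases "c' = b") (simp_all add: Kd K)
    qed
    also have "\<dots> = 1\<^sub>m n $$ (c,c')"
      using cc u by (cases "c = c'") (simp_all cong: conj_cong)
    finally show ?thesis .
  qed
  then have "sum_mats n n (map (\<lambda>K. dagger K * K) (prepare_channel n N u)) = 1\<^sub>m n"
    using sum_mats_carrier_entry[OF car] by (intro eq_matI) auto
  then show ?thesis unfolding kraus_channel_def using prepare_channel_carrier by blast
qed

lemma is_outer_sum_apply_prepare_channel:
  assumes \<rho>: "\<rho> \<in> carrier_mat n n" and tr: "mtrace \<rho> = 1"
  shows "is_outer_sum N (apply_channel N (prepare_channel n N u) \<rho>) (UNIV :: unit set) (\<lambda>_. u)"
proof -
  define K where "K b = Matrix.mat N n (\<lambda>(i,c). if c = b then u i else 0)" for b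
  have Kc: "K b \<in> carrier_mat N n" for b unfolding K_def by simp
  have Kd: "dagger (K b) $$ (c,i) = (if c = b then cnj (u i) else 0)" if "c < n" "i < N" for b c i
    using dagger_entry[OF Kc that] that by (simp add: K_def)
  have K: "K b $$ (i,c) = (if c = b then u i else 0)" if "i < N" "c < n" for b c i
    using that unfolding K_def by simp
  have entry: "(K b * \<rho> * dagger (K b)) $$ (i,j) = u i * cnj (u j) * \<rho> $$ (b,b)"
    if b: "b < n" and ij: "i < N" "j < N" for b i j
  proof -
    have Kr: "(K b * \<rho>) $$ (i,l) = u i * \<rho> $$ (b,l)" if "l < n" for l
      unfolding mult_mat_entry[OF Kc \<rho> ij(1) that] using b ij that
      by (subst sum.cong[OF refl, of _ _ "\<lambda>c. if c = b then u i * \<rho> $$ (b,l) else 0"]) (auto simp: K)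
    show ?thesis
      unfolding mult_mat_entry[OF mult_carrier_mat[OF Kc \<rho>] dagger_carrier[OF Kc] ij] using b ij
      by (subst sum.cong[OF refl, of _ _ "\<lambda>l. if l = b then u i * cnj (u j) * \<rho> $$ (b,b) else 0"])
        (auto simp: Kr Kd)
  qed
  have "apply_channel N (prepare_channel n N u) \<rho> $$ (i,j) = u i * cnj (u j)" if ij: "i < N" "j < N" for i j
  proof -
    have "apply_channel N (prepare_channel n N u) \<rho> $$ (i,j) = (\<Sum>b<n. (K b * \<rho> * dagger (K b)) $$ (i,j))"
      using apply_channel_entry[OF prepare_channel_carrier \<rho> ij] unfolding prepare_channel_def K_def by simp
    also have "\<dots> = u i * cnj (u j) * mtrace \<rho>"
      unfolding mtrace_def using \<rho> entry ij by (simp add: sum_distrib_left)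
    finally show ?thesis using tr by simp
  qed
  then show ?thesis
    unfolding is_outer_sum_def using apply_channel_carrier[OF prepare_channel_carrier \<rho>] by simp
qed

section \<open>Correct QPKE schemes and the attack\<close>

locale correct_qpke =
  fixes skgen :: "'sk::finite pmf" and pkgen :: "'sk \<Rightarrow> 'pk::finite pmf"
    and rho :: "'sk \<Rightarrow> 'pk \<Rightarrow> complex mat" and enc :: "'pk \<Rightarrow> bool \<Rightarrow> complex mat list"
    and dec :: "'sk \<Rightarrow> complex mat" and dpk dct :: nat
  assumes correct: "qpke_correct skgen pkgen rho enc dec dpk dct"
begin

definition weight :: "'sk \<Rightarrow> 'pk \<Rightarrow> real" where
  "weight sk pk = pmf skgen sk * pmf (pkgen sk) pk"

definition separating :: "'pk \<Rightarrow> (nat \<Rightarrow> complex) \<Rightarrow> bool" where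
  "separating pk v \<longleftrightarrow> (\<forall>k0<length (enc pk False). \<forall>k1<length (enc pk True).
     cinner dct (mat_app (enc pk False ! k0) dpk v) (mat_app (enc pk True ! k1) dpk v) = 0)"

lemma weight_nonneg: "0 \<le> weight sk pk"
  unfolding weight_def by simp

lemma sum_weight: "(\<Sum>sk\<in>UNIV. \<Sum>pk\<in>UNIV. weight sk pk) = 1"
  unfolding weight_def by (simp add: sum_distrib_left[symmetric] sum_pmf_eq_1)

lemma density_rho: "0 < weight sk pk \<Longrightarrow> density dpk (rho sk pk)"
  using correct pmf_nonneg[of skgen sk] pmf_nonneg[of "pkgen sk" pk]
  unfolding qpke_correct_def weight_def by (auto simp: zero_less_mult_iff)

lemma kraus_channel_enc: "kraus_channel dpk dct (enc pk m)"
  and povm_elt_dec: "povm_elt dct (dec sk)"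
  using correct unfolding qpke_correct_def by auto

lemma ciphertext_state:
  assumes "0 < weight sk pk"
  obtains T :: "(nat \<times> nat) set" and y
  where "is_outer_sum dct (apply_channel dct (enc pk m) (rho sk pk)) T y"
    and "mtrace (apply_channel dct (enc pk m) (rho sk pk)) = 1"
proof -
  have \<rho>: "density dpk (rho sk pk)" by (rule density_rho[OF assms])
  obtain T :: "nat set" and y where M: "is_outer_sum dpk (rho sk pk) T y"
    using psd_is_outer_sum[of dpk "rho sk pk"] \<rho> unfolding density_def by blast
  have Kc: "\<forall>K\<in>set (enc pk m). K \<in> carrier_mat dct dpk"
    using kraus_channel_enc unfolding kraus_channel_def by blast
  show ?thesis
    using that[OF is_outer_sum_apply_channel[OF Kc M]] mtrace_apply_channel[OF kraus_channel_enc M] \<rho>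
    unfolding density_def by simp
qed

lemma meas_prob_ciphertext:
  assumes w: "0 < weight sk pk"
  shows "meas_prob dct (dec sk) (\<not> b) (apply_channel dct (enc pk m) (rho sk pk)) =
      1 - meas_prob dct (dec sk) b (apply_channel dct (enc pk m) (rho sk pk))"
    and "0 \<le> meas_prob dct (dec sk) b (apply_channel dct (enc pk m) (rho sk pk))"
proof -
  obtain T :: "(nat \<times> nat) set" and y
    where X: "is_outer_sum dct (apply_channel dct (enc pk m) (rho sk pk)) T y"
      and tr: "mtrace (apply_channel dct (enc pk m) (rho sk pk)) = 1"
    by (rule ciphertext_state[OF w])
  have E: "dec sk \<in> carrier_mat dct dct" using povm_elt_dec unfolding povm_elt_def psd_def by blast
  have "apply_channel dct (enc pk m) (rho sk pk) \<in> carrier_mat dct dct"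
    using X unfolding is_outer_sum_def by simp
  then show "meas_prob dct (dec sk) (\<not> b) (apply_channel dct (enc pk m) (rho sk pk)) =
      1 - meas_prob dct (dec sk) b (apply_channel dct (enc pk m) (rho sk pk))"
    by (rule meas_prob_not[OF E _ tr])
  show "0 \<le> meas_prob dct (dec sk) b (apply_channel dct (enc pk m) (rho sk pk))"
    by (rule meas_prob_nonneg[OF povm_elt_dec X])
qed

lemma dec_enc_eq_1:
  assumes w: "0 < weight sk pk"
  shows "meas_prob dct (dec sk) m (apply_channel dct (enc pk m) (rho sk pk)) = 1"
proof -
  let ?p = "\<lambda>(sk,pk). meas_prob dct (dec sk) m (apply_channel dct (enc pk m) (rho sk pk))"
  have le1: "?p (sk',pk') \<le> 1" if w': "0 < weight sk' pk'" for sk' pk'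
    using meas_prob_ciphertext(1)[OF w', of m m] meas_prob_ciphertext(2)[OF w', of "\<not> m" m] by simp
  have sum_w: "(\<Sum>(sk,pk)\<in>UNIV \<times> UNIV. weight sk pk) = 1"
    using sum_weight unfolding sum.cartesian_product .
  have sum_wp: "(\<Sum>(sk,pk)\<in>UNIV \<times> UNIV. weight sk pk * ?p (sk,pk)) = 1"
    using correct unfolding qpke_correct_def weight_def sum.cartesian_product by simp
  have "?p (sk,pk) = 1"
  proof (rule sum_weighted_eq_1_imp[of "UNIV \<times> UNIV" "\<lambda>(sk,pk). weight sk pk" ?p "(sk,pk)"])
    show "(\<Sum>q\<in>UNIV \<times> UNIV. (case q of (sk,pk) \<Rightarrow> weight sk pk) * ?p q) = 1"
      using sum_wp by (simp add: case_prod_beta)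
  qed (use sum_w le1 w weight_nonneg in auto)
  then show ?thesis by simp
qed

lemma dec_enc_wrong_eq_0:
  "0 < weight sk pk \<Longrightarrow> meas_prob dct (dec sk) (\<not> m) (apply_channel dct (enc pk m) (rho sk pk)) = 0"
  using meas_prob_ciphertext(1)[of sk pk m m] dec_enc_eq_1[of sk pk m] by simp

lemma dpk_pos: "0 < dpk"
proof -
  have "\<exists>sk pk. 0 < weight sk pk"
  proof (rule ccontr)
    assume "\<nexists>sk pk. 0 < weight sk pk"
    then have "weight sk pk = 0" for sk pk using weight_nonneg[of sk pk] by (metis order_le_less)
    then show False using sum_weight by simp
  qed
  then obtain sk pk where "0 < weight sk pk" by blast
  then have "density dpk (rho sk pk)" by (rule density_rho)
  then show ?thesis unfolding density_def psd_def mtrace_def by (cases dpk) auto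
qed

lemma ex_unit_vector_separating:
  "\<exists>v. cinner dpk v v = 1 \<and> (\<forall>sk. 0 < weight sk pk \<longrightarrow> separating pk v)"
proof (cases "\<exists>sk. 0 < weight sk pk")
  case True
  then obtain sk where w: "0 < weight sk pk" by blast
  have "Re (mtrace (dec sk * apply_channel dct (enc pk False) (rho sk pk))) = 0"
    using dec_enc_wrong_eq_0[OF w, of False] unfolding meas_prob_def by simp
  moreover have "Re (mtrace ((1\<^sub>m dct - dec sk) * apply_channel dct (enc pk True) (rho sk pk))) = 0"
    using dec_enc_wrong_eq_0[OF w, of True] unfolding meas_prob_def by simp
  ultimately show ?thesis
    using ex_unit_vector_separating_channels[OF density_rho[OF w] kraus_channel_enc kraus_channel_enc
        povm_elt_dec]
    unfolding separating_def by blast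
next
  case False
  have "cinner dpk (\<lambda>c. of_bool (c = 0)) (\<lambda>c. of_bool (c = 0)) = 1"
    using cinner_indicator_left[OF dpk_pos] by simp
  then show ?thesis using False by blast
qed

end

locale qpke_attack = correct_qpke skgen pkgen rho enc dec dpk dct
  for skgen :: "'sk::finite pmf" and pkgen :: "'sk \<Rightarrow> 'pk::finite pmf"
    and rho enc dec dpk dct +
  fixes V :: "'pk \<Rightarrow> nat \<Rightarrow> complex" and J :: "'pk \<Rightarrow> nat" and dint :: nat
  assumes V_unit: "cinner dpk (V pk) (V pk) = 1"
    and V_separating: "0 < weight sk pk \<Longrightarrow> separating pk (V pk)"
    and J_less: "J pk < dint"
    and J_inj: "inj J"
begin

definition adversary :: "'pk \<Rightarrow> complex mat list" where
  "adversary pk = prepare_channel dpk (dpk * dint) (tensor_ket dint (J pk) (V pk))"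

definition out_index :: "bool \<Rightarrow> ('sk \<times> 'pk \<times> nat) set" where
  "out_index m = (SIGMA sk:UNIV. SIGMA pk:UNIV. {..<length (enc pk m)})"

definition out_vec :: "bool \<Rightarrow> 'sk \<times> 'pk \<times> nat \<Rightarrow> nat \<Rightarrow> complex" where
  "out_vec m = (\<lambda>(sk,pk,k) i.
     of_real (sqrt (weight sk pk)) * tensor_ket dint (J pk) (mat_app (enc pk m ! k) dpk (V pk)) i)"

lemma kraus_channel_adversary: "kraus_channel dpk (dpk * dint) (adversary pk)"
  unfolding adversary_def
  by (rule kraus_channel_prepare_channel) (simp add: cinner_tensor_ket J_less V_unit)

lemma enc_adversary_entry:
  assumes \<rho>: "\<rho> \<in> carrier_mat dpk dpk" "mtrace \<rho> = 1" and ij: "i < dct * dint" "j < dct * dint"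
  shows "apply_channel (dct * dint) (map (\<lambda>K. kron K (1\<^sub>m dint)) (enc pk m))
      (apply_channel (dpk * dint) (adversary pk) \<rho>) $$ (i,j) =
    (\<Sum>k<length (enc pk m). tensor_ket dint (J pk) (mat_app (enc pk m ! k) dpk (V pk)) i *
       cnj (tensor_ket dint (J pk) (mat_app (enc pk m ! k) dpk (V pk)) j))"
proof -
  have Kc: "\<forall>K\<in>set (enc pk m). K \<in> carrier_mat dct dpk"
    using kraus_channel_enc unfolding kraus_channel_def by blast
  then have Kc': "\<forall>K\<in>set (map (\<lambda>K. kron K (1\<^sub>m dint)) (enc pk m)). K \<in> carrier_mat (dct * dint) (dpk * dint)"
    by (auto intro: kron_one_carrier)
  have prep: "is_outer_sum (dpk * dint) (apply_channel (dpk * dint) (adversary pk) \<rho>) (UNIV :: unit set)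
      (\<lambda>_. tensor_ket dint (J pk) (V pk))"
    unfolding adversary_def by (rule is_outer_sum_apply_prepare_channel[OF \<rho>])
  have kron: "mat_app (kron (enc pk m ! k) (1\<^sub>m dint)) (dpk * dint) (tensor_ket dint (J pk) (V pk)) i' =
      tensor_ket dint (J pk) (mat_app (enc pk m ! k) dpk (V pk)) i'"
    if "k < length (enc pk m)" "i' < dct * dint" for k i'
    using mat_app_kron_one_tensor_ket[OF _ J_less that(2)] Kc that(1) by simp
  let ?y = "\<lambda>k. tensor_ket dint (J pk) (mat_app (enc pk m ! k) dpk (V pk))"
  have "apply_channel (dct * dint) (map (\<lambda>K. kron K (1\<^sub>m dint)) (enc pk m))
      (apply_channel (dpk * dint) (adversary pk) \<rho>) $$ (i,j) =
      (\<Sum>(k,u)\<in>{..<length (enc pk m)} \<times> (UNIV :: unit set). ?y k i * cnj (?y k j))"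
    using is_outer_sum_apply_channel[OF Kc' prep] ij
    unfolding is_outer_sum_def by (auto intro!: sum.cong simp: kron)
  also have "\<dots> = (\<Sum>k<length (enc pk m). ?y k i * cnj (?y k j))"
    unfolding sum.cartesian_product[symmetric] by simp
  finally show ?thesis .
qed

lemma sum_out_index:
  "(\<Sum>t\<in>out_index m. f t) = (\<Sum>sk\<in>UNIV. \<Sum>pk\<in>UNIV. \<Sum>k<length (enc pk m). f (sk,pk,k))"
proof -
  have "(\<Sum>t\<in>out_index m. f t) = (\<Sum>sk\<in>UNIV. \<Sum>q\<in>(SIGMA pk:UNIV. {..<length (enc pk m)}). f (sk,q))"
    unfolding out_index_def by (subst sum.Sigma) (auto intro!: finite_SigmaI)
  also have "\<dots> = (\<Sum>sk\<in>UNIV. \<Sum>pk\<in>UNIV. \<Sum>k<length (enc pk m). f (sk,pk,k))"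
    by (rule sum.cong[OF refl], subst sum.Sigma) auto
  finally show ?thesis .
qed

lemma exp_out_is_outer_sum:
  "is_outer_sum (dct * dint) (exp_out skgen pkgen rho enc dpk dct dint adversary m) (out_index m) (out_vec m)"
proof -
  have "of_real (weight sk pk) *
      apply_channel (dct * dint) (map (\<lambda>K. kron K (1\<^sub>m dint)) (enc pk m))
        (apply_channel (dpk * dint) (adversary pk) (rho sk pk)) $$ (i,j) =
      (\<Sum>k<length (enc pk m). out_vec m (sk,pk,k) i * cnj (out_vec m (sk,pk,k) j))"
    if ij: "i < dct * dint" "j < dct * dint" for sk pk i j
  proof (cases "0 < weight sk pk")
    case True
    have \<rho>: "rho sk pk \<in> carrier_mat dpk dpk" "mtrace (rho sk pk) = 1"
      using density_rho[OF True] unfolding density_def psd_def by auto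
    have "of_real (weight sk pk) = of_real (sqrt (weight sk pk)) * cnj (of_real (sqrt (weight sk pk)) :: complex)"
      using weight_nonneg by (simp flip: of_real_mult)
    then show ?thesis
      unfolding enc_adversary_entry[OF \<rho> ij] out_vec_def by (simp add: sum_distrib_left mult_ac)
  next
    case False
    then have "weight sk pk = 0" using weight_nonneg[of sk pk] by simp
    then show ?thesis unfolding out_vec_def by simp
  qed
  then show ?thesis
    unfolding is_outer_sum_def sum_out_index exp_out_def weight_def[symmetric]
    by (simp add: finite_SigmaI out_index_def)
qed

lemma mtrace_exp_out: "mtrace (exp_out skgen pkgen rho enc dpk dct dint adversary m) = 1"
proof -
  have "(\<Sum>k<length (enc pk m). cinner (dct * dint) (out_vec m (sk,pk,k)) (out_vec m (sk,pk,k))) =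
      of_real (weight sk pk)" for sk pk
  proof -
    have "of_real (sqrt (weight sk pk)) * cnj (of_real (sqrt (weight sk pk))) = (of_real (weight sk pk) :: complex)"
      using weight_nonneg by (simp flip: of_real_mult)
    then show ?thesis
      unfolding out_vec_def using kraus_channel_cinner[OF kraus_channel_enc, of pk m "V pk" "V pk"]
      by (simp add: cinner_scale_left cinner_scale_right cinner_tensor_ket J_less V_unit
          sum_distrib_left[symmetric] mult_ac)
  qed
  then show ?thesis
    unfolding mtrace_outer_sum[OF exp_out_is_outer_sum] sum_out_index
    using sum_weight by (simp flip: of_real_sum)
qed

lemma out_vec_orthogonal:
  assumes "t \<in> out_index True" "t' \<in> out_index False"
  shows "cinner (dct * dint) (out_vec True t) (out_vec False t') = 0"
proof -
  obtain sk pk k sk' pk' k' where t: "t = (sk,pk,k)" "k < length (enc pk True)"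
    and t': "t' = (sk',pk',k')" "k' < length (enc pk' False)"
    using assms unfolding out_index_def by auto
  let ?y1 = "mat_app (enc pk True ! k) dpk (V pk)" and ?y0 = "mat_app (enc pk' False ! k') dpk (V pk')"
  have "cinner (dct * dint) (out_vec True t) (out_vec False t') =
      of_real (sqrt (weight sk pk)) * of_real (sqrt (weight sk' pk')) *
        (if pk = pk' then cinner dct ?y1 ?y0 else 0)"
    unfolding t t' out_vec_def
    by (simp add: cinner_scale_left cinner_scale_right cinner_tensor_ket[OF J_less J_less] inj_eq[OF J_inj])
  also have "\<dots> = 0"
  proof (cases "pk = pk' \<and> 0 < weight sk pk")
    case True
    then have "cinner dct ?y0 ?y1 = 0"
      using V_separating[of sk pk] t(2) t'(2) unfolding separating_def by auto
    then have "cinner dct ?y1 ?y0 = 0" using cinner_commute[of dct ?y0 ?y1] by simp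
    then show ?thesis using True by simp
  next
    case False
    then have "pk \<noteq> pk' \<or> weight sk pk = 0" using weight_nonneg[of sk pk] by auto
    then show ?thesis by auto
  qed
  finally show ?thesis .
qed

theorem attack_distinguishes:
  "trace_distance (dct * dint) (exp_out skgen pkgen rho enc dpk dct dint adversary False)
     (exp_out skgen pkgen rho enc dpk dct dint adversary True) = 1"
  "\<exists>E. povm_elt (dct * dint) E \<and>
     (\<forall>m. meas_prob (dct * dint) E m (exp_out skgen pkgen rho enc dpk dct dint adversary m) = 1)"
proof -
  note distinguishable = orthogonal_states_distinguishable[OF exp_out_is_outer_sum mtrace_exp_out
      exp_out_is_outer_sum mtrace_exp_out out_vec_orthogonal]
  show "trace_distance (dct * dint) (exp_out skgen pkgen rho enc dpk dct dint adversary False)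
     (exp_out skgen pkgen rho enc dpk dct dint adversary True) = 1"
    by (rule distinguishable(1))
  from distinguishable(2) obtain E where povm: "povm_elt (dct * dint) E"
    and E: "\<forall>m. meas_prob (dct * dint) E m (if m then exp_out skgen pkgen rho enc dpk dct dint adversary True
      else exp_out skgen pkgen rho enc dpk dct dint adversary False) = 1"
    by blast
  have "meas_prob (dct * dint) E m (exp_out skgen pkgen rho enc dpk dct dint adversary m) = 1" for m
    using E[rule_format, of m] by (cases m) simp_all
  then show "\<exists>E. povm_elt (dct * dint) E \<and>
     (\<forall>m. meas_prob (dct * dint) E m (exp_out skgen pkgen rho enc dpk dct dint adversary m) = 1)"
    using povm by blast
qed

end

theorem theoremA1:
  fixes skgen :: "'sk::finite pmf" and pkgen :: "'sk \<Rightarrow> 'pk::finite pmf"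
    and rho :: "'sk \<Rightarrow> 'pk \<Rightarrow> complex mat" and enc :: "'pk \<Rightarrow> bool \<Rightarrow> complex mat list"
    and dec :: "'sk \<Rightarrow> complex mat" and dpk dct :: nat
  assumes "qpke_correct skgen pkgen rho enc dec dpk dct"
  shows "\<exists>dint adv. (\<forall>pk. kraus_channel dpk (dpk * dint) (adv pk)) \<and>
     trace_distance (dct * dint) (exp_out skgen pkgen rho enc dpk dct dint adv False)
                                  (exp_out skgen pkgen rho enc dpk dct dint adv True) = 1 \<and>
     (\<exists>E. povm_elt (dct * dint) E \<and>
        (\<forall>m. meas_prob (dct * dint) E m (exp_out skgen pkgen rho enc dpk dct dint adv m) = 1))"
proof -
  interpret correct_qpke skgen pkgen rho enc dec dpk dct by (rule correct_qpke.intro[OF assms])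
  obtain V where V: "\<And>pk. cinner dpk (V pk) (V pk) = 1"
    "\<And>sk pk. 0 < weight sk pk \<Longrightarrow> separating pk (V pk)"
    using ex_unit_vector_separating by metis
  obtain J :: "'pk \<Rightarrow> nat" and dint where J: "J ` UNIV = {i. i < dint}" "inj J"
    using finite_imp_inj_to_nat_seg[of "UNIV :: 'pk set"] by auto
  interpret qpke_attack skgen pkgen rho enc dec dpk dct V J dint
    by unfold_locales (use V J in auto)
  show ?thesis using kraus_channel_adversary attack_distinguishes by blast
qed

end
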